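(* Let $Q:\mathbb{R}^d\to\mathbb{R}$ be continuous with $|Q|$ positive homogeneous, with unital level set $S=\{\eta:|Q(\eta)|=1\}$ and homogeneous order $\mu$. Let $\mathcal U$ be an open neighborhood of $0$ and $\widetilde Q\in C^2(\mathcal U;\mathbb{R})$. Given $E\in\mathrm{Exp}(Q)$, set $F=E/\mu$ and $f_{n,y,\eta}(\theta)=Q(\theta^F\eta)+n\widetilde Q(n^{-E}\theta^F\eta)+y\cdot(\theta^F\eta)$ for $n\in\mathbb{N}_+$, $y\in\mathbb{R}^d$, $\eta\in S$, $\theta>0$ with $n^{-E}\theta^F\eta\in\mathcal U$. If $\mu<1$ and $\widetilde Q$ is strongly subhomogeneous with respect to $E$ of order $2$, then for each compact $K\subseteq\mathbb{R}^d$ there exist $\delta>0$ and $\theta_0\ge1$ such that, for every $n\in\mathbb{N}_+$ with $\theta_0\le(n\delta)^\mu$, $\theta\mapsto\partial_\theta f_{n,y,\eta}(\theta)$ is defined and monotonic on $[\theta_0,(n\delta)^\mu]$ and $|\partial_\theta f_{n,y,\eta}(\theta)|\ge\frac{1}{2\mu}\theta^{1/\mu-1}$ for all $\theta_0\le\theta\le(n\delta)^\mu$, $y\in K$, $\eta\in S$.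
   Context: For $E\in\mathrm{End}(\mathbb{R}^d)$, $t>0$, $t^E:=\exp(\log(t)E)$. $P$ homogeneous w.r.t. $E$: $P(t^E\xi)=tP(\xi)$ for all $t>0,\xi$; $\mathrm{Exp}(P)$ = set of such $E$. Positive homogeneous: real, continuous, positive definite ($\ge0$, zero only at $0$), $\mathrm{Exp}(P)\ne\emptyset$, $\{P=1\}$ compact; homogeneous order $\mathrm{tr}E$ for $E\in\mathrm{Exp}(P)$. For continuous real $Q$ with $|Q|$ positive homogeneous, $\mathrm{Exp}(Q)=\mathrm{Exp}(|Q|)$. Given $E$ with $\lim_{t\to0}\|t^E\|=0$, a function $\widetilde Q\in C^l$ near $0$ is strongly subhomogeneous w.r.t. $E$ of order $l$ if for each $\epsilon>0$ and compact $K$ there is $\tau>0$ with $|t^k\partial_t^k\widetilde Q(t^E\xi)|\le\epsilon t$ for all $k\in\{0,\dots,l\}$, $0<t<\tau$, $\xi\in K$. *)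

theory Defs
  imports "HOL-Analysis.Analysis"
begin

text \<open>Endomorphisms of R^d are modelled as linear maps E :: 'a \<Rightarrow> 'a on a
  Euclidean space 'a (dimension d = DIM('a)).\<close>

definition tpow :: "real \<Rightarrow> ('a::euclidean_space \<Rightarrow> 'a) \<Rightarrow> 'a \<Rightarrow> 'a" where
  "tpow t E \<xi> = (\<Sum>k. ((ln t) ^ k / fact k) *\<^sub>R (E ^^ k) \<xi>)"

definition trace_op :: "('a::euclidean_space \<Rightarrow> 'a) \<Rightarrow> real" where
  "trace_op E = (\<Sum>b\<in>Basis. inner (E b) b)"

definition homogeneous_wrt :: "('a::euclidean_space \<Rightarrow> real) \<Rightarrow> ('a \<Rightarrow> 'a) \<Rightarrow> bool" where
  "homogeneous_wrt P E \<longleftrightarrow> (\<forall>t>0. \<forall>\<xi>. P (tpow t E \<xi>) = t * P \<xi>)"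

definition Exps :: "('a::euclidean_space \<Rightarrow> real) \<Rightarrow> ('a \<Rightarrow> 'a) set" where
  "Exps P = {E. linear E \<and> homogeneous_wrt P E}"

definition positive_homogeneous :: "('a::euclidean_space \<Rightarrow> real) \<Rightarrow> bool" where
  "positive_homogeneous P \<longleftrightarrow>
     continuous_on UNIV P \<and> (\<forall>\<xi>. P \<xi> \<ge> 0) \<and> (\<forall>\<xi>. P \<xi> = 0 \<longleftrightarrow> \<xi> = 0) \<and>
     Exps P \<noteq> {} \<and> compact {\<xi>. P \<xi> = 1}"

definition C2_on :: "'a::euclidean_space set \<Rightarrow> ('a \<Rightarrow> real) \<Rightarrow> bool" where
  "C2_on U f \<longleftrightarrow> open U \<and>
     (\<exists>f' :: 'a \<Rightarrow> ('a \<Rightarrow>\<^sub>L real). \<exists>f'' :: 'a \<Rightarrow> ('a \<Rightarrow>\<^sub>L ('a \<Rightarrow>\<^sub>L real)).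
        (\<forall>x\<in>U. (f has_derivative blinfun_apply (f' x)) (at x)) \<and>
        (\<forall>x\<in>U. (f' has_derivative blinfun_apply (f'' x)) (at x)) \<and>
        continuous_on U f'')"

definition strongly_subhomogeneous ::
  "('a::euclidean_space \<Rightarrow> real) \<Rightarrow> ('a \<Rightarrow> 'a) \<Rightarrow> nat \<Rightarrow> bool" where
  "strongly_subhomogeneous Qt E l \<longleftrightarrow>
     (\<forall>\<epsilon>>0. \<forall>K. compact K \<longrightarrow>
        (\<exists>\<tau>>0. \<forall>k\<le>l. \<forall>t. 0 < t \<and> t < \<tau> \<longrightarrow> (\<forall>\<xi>\<in>K.
           \<bar>t ^ k * (deriv ^^ k) (\<lambda>s. Qt (tpow s E \<xi>)) t\<bar> \<le> \<epsilon> * t)))"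

end

theory Submission
  imports Defs "Jordan_Normal_Form.Determinant"
begin

text \<open>With \<open>s = \<theta>^(1/\<mu>)\<close>, homogeneity of \<open>Q\<close> and the group law of \<open>t^E\<close> turn the phase into
  \<open>\<Phi> s = Q \<eta> s + n Qt ((s/n)^E \<eta>) + y \<bullet> s^E \<eta>\<close>, where \<open>Q \<eta> = \<plusminus>1\<close>, and \<open>f' \<theta> = s^(1-\<mu>) \<Phi>' s / \<mu>\<close>.
  Strong subhomogeneity keeps the contribution of \<open>Qt\<close> to \<open>\<Phi>'\<close> and to \<open>s \<Phi>''\<close> small while
  \<open>s/n \<le> \<delta>\<close>. Liouville's formula \<open>det s^E = s^(tr E)\<close> and Cramer's rule applied to the contraction
  \<open>s^(-E)\<close> give \<open>|s^E| \<le> C s^(tr E)\<close>; as \<open>tr E = \<mu> < 1\<close>, the linear term is negligible for large \<open>s\<close>.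
  Hence \<open>\<Phi>'\<close> stays close to \<open>\<plusminus>1\<close> and \<open>s \<Phi>''\<close> stays small, which bounds \<open>|f'|\<close> from below and
  makes \<open>s^(1-\<mu>) \<Phi>' s\<close>, and with it \<open>f'\<close>, monotone.\<close>

section \<open>Exponentials of linear maps\<close>

definition exp_op :: "('a::euclidean_space \<Rightarrow> 'a) \<Rightarrow> real \<Rightarrow> 'a \<Rightarrow> 'a" where
  "exp_op E \<tau> \<xi> = (\<Sum>k. (\<tau> ^ k / fact k) *\<^sub>R (E ^^ k) \<xi>)"

lemma tpow_eq_exp_op: "tpow t E = exp_op E (ln t)"
  by (simp add: fun_eq_iff tpow_def exp_op_def)

lemma linear_funpow:
  fixes E :: "'a::real_vector \<Rightarrow> 'a"
  assumes "linear E"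
  shows "linear (E ^^ k)"
proof (induction k)
  case 0
  show ?case using real_vector.linear_ident by simp
next
  case (Suc k)
  then show ?case using linear_compose[OF Suc assms] by (simp add: comp_def)
qed

lemma norm_funpow_le:
  fixes E :: "'a::real_normed_vector \<Rightarrow> 'a"
  assumes "\<And>x. norm (E x) \<le> B * norm x" "0 \<le> B"
  shows "norm ((E ^^ k) x) \<le> B ^ k * norm x"
proof (induction k)
  case (Suc k)
  have "norm ((E ^^ Suc k) x) \<le> B * norm ((E ^^ k) x)" using assms(1) by simp
  also have "\<dots> \<le> B * (B ^ k * norm x)" using Suc assms(2) by (rule mult_left_mono)
  finally show ?case by simp
qed simp

lemma summable_exp_op:
  fixes E :: "'a::euclidean_space \<Rightarrow> 'a"
  assumes "linear E"
  shows "summable (\<lambda>k. (\<tau> ^ k / fact k) *\<^sub>R (E ^^ k) \<xi>)"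
proof -
  obtain B where B: "B > 0" "\<And>x. norm (E x) \<le> B * norm x"
    using bounded_linear.pos_bounded assms linear_conv_bounded_linear by (metis mult.commute)
  show ?thesis
  proof (rule summable_comparison_test'[where N = 0])
    show "summable (\<lambda>k. inverse (fact k) * (\<bar>\<tau>\<bar> * B) ^ k * norm \<xi>)"
      using summable_mult2[OF summable_exp] .
    fix k :: nat
    have "norm ((\<tau> ^ k / fact k) *\<^sub>R (E ^^ k) \<xi>) = \<bar>\<tau>\<bar> ^ k / fact k * norm ((E ^^ k) \<xi>)"
      by (simp add: power_abs)
    also have "\<dots> \<le> \<bar>\<tau>\<bar> ^ k / fact k * (B ^ k * norm \<xi>)"
      using norm_funpow_le[OF B(2)] B(1) by (intro mult_left_mono) auto
    finally show "norm ((\<tau> ^ k / fact k) *\<^sub>R (E ^^ k) \<xi>) \<le> inverse (fact k) * (\<bar>\<tau>\<bar> * B) ^ k * norm \<xi>"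
      by (simp add: power_mult_distrib field_simps)
  qed
qed

lemma bounded_linear_apply_exp_op:
  fixes E :: "'a::euclidean_space \<Rightarrow> 'a" and L :: "'a \<Rightarrow> 'b::real_normed_vector"
  assumes "linear E" "bounded_linear L"
  shows "L (exp_op E \<tau> \<xi>) = (\<Sum>k. (\<tau> ^ k / fact k) *\<^sub>R L ((E ^^ k) \<xi>))"
  unfolding exp_op_def
  by (simp add: bounded_linear.suminf[OF assms(2) summable_exp_op[OF assms(1)]]
        linear_cmul[OF bounded_linear.linear[OF assms(2)]])

lemma linear_exp_op:
  fixes E :: "'a::euclidean_space \<Rightarrow> 'a"
  assumes "linear E"
  shows "linear (exp_op E \<tau>)"
proof (rule linearI)
  fix x y :: 'a and c :: real
  show "exp_op E \<tau> (x + y) = exp_op E \<tau> x + exp_op E \<tau> y"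
    unfolding exp_op_def
    by (simp add: suminf_add[OF summable_exp_op[OF assms] summable_exp_op[OF assms]]
          linear_add[OF linear_funpow[OF assms]] scaleR_add_right)
  have "c *\<^sub>R exp_op E \<tau> x = (\<Sum>k. c *\<^sub>R ((\<tau> ^ k / fact k) *\<^sub>R (E ^^ k) x))"
    unfolding exp_op_def by (rule suminf_scaleR_right[OF summable_exp_op[OF assms]])
  then show "exp_op E \<tau> (c *\<^sub>R x) = c *\<^sub>R exp_op E \<tau> x"
    by (simp add: exp_op_def linear_cmul[OF linear_funpow[OF assms]] mult.commute)
qed

lemma exp_op_commute:
  fixes E :: "'a::euclidean_space \<Rightarrow> 'a"
  assumes "linear E"
  shows "E (exp_op E \<tau> \<xi>) = exp_op E \<tau> (E \<xi>)"
  unfolding bounded_linear_apply_exp_op[OF assms assms[unfolded linear_conv_bounded_linear]]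
  by (simp add: exp_op_def funpow_swap1)

lemma exp_op_0: "exp_op E 0 \<xi> = \<xi>"
proof -
  have "(\<lambda>k. ((0::real) ^ k / fact k) *\<^sub>R (E ^^ k) \<xi>) = (\<lambda>k. if k = 0 then (E ^^ k) \<xi> else 0)"
    by (auto simp: fun_eq_iff)
  then have "(\<lambda>k. ((0::real) ^ k / fact k) *\<^sub>R (E ^^ k) \<xi>) sums \<xi>"
    using sums_single[of 0 "\<lambda>k. (E ^^ k) \<xi>"] by simp
  then show ?thesis unfolding exp_op_def by (rule sums_unique[symmetric])
qed

lemma has_vector_derivative_exp_op:
  fixes E :: "'a::euclidean_space \<Rightarrow> 'a"
  assumes "linear E"
  shows "((\<lambda>\<tau>. exp_op E \<tau> \<xi>) has_vector_derivative E (exp_op E \<tau> \<xi>)) (at \<tau>)"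
proof -
  define c where "c b k = inner ((E ^^ k) \<xi>) b / fact k" for b k
  have coord: "inner (exp_op E \<tau> x) b = (\<Sum>k. inner ((E ^^ k) x) b / fact k * \<tau> ^ k)" for \<tau> x b
    using bounded_linear_apply_exp_op[OF assms bounded_linear_inner_left[of b], of \<tau> x]
    by (simp add: field_simps)
  have summable: "summable (\<lambda>k. c b k * \<tau> ^ k)" for b \<tau>
  proof -
    have "summable (\<lambda>k. inner ((\<tau> ^ k / fact k) *\<^sub>R (E ^^ k) \<xi>) b)"
      by (rule bounded_linear.summable[OF bounded_linear_inner_left summable_exp_op[OF assms]])
    then show ?thesis by (simp add: c_def field_simps)
  qed
  have diffs: "diffs (c b) k = inner ((E ^^ k) (E \<xi>)) b / fact k" for b k
    by (simp add: diffs_def c_def funpow_Suc_right del: funpow.simps)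
  have deriv_coord: "((\<lambda>\<tau>. \<Sum>k. c b k * \<tau> ^ k) has_field_derivative inner (exp_op E \<tau> (E \<xi>)) b) (at \<tau>)"
    for b
    using termdiffs_strong_converges_everywhere[OF summable] by (simp add: diffs coord)
  have "(\<lambda>\<tau>. exp_op E \<tau> \<xi>) = (\<lambda>\<tau>. \<Sum>b\<in>Basis. (\<Sum>k. c b k * \<tau> ^ k) *\<^sub>R b)"
    by (subst (1) euclidean_representation[symmetric]) (simp add: coord c_def)
  moreover have "((\<lambda>\<tau>. \<Sum>b\<in>Basis. (\<Sum>k. c b k * \<tau> ^ k) *\<^sub>R b) has_vector_derivative
      (\<Sum>b\<in>Basis. inner (exp_op E \<tau> (E \<xi>)) b *\<^sub>R b)) (at \<tau>)"
    by (intro has_vector_derivative_sum)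
      (use has_vector_derivative_scaleR[OF deriv_coord has_vector_derivative_const] in simp)
  ultimately show ?thesis
    by (simp add: euclidean_representation exp_op_commute[OF assms])
qed

lemma linear_ode_zero_forward:
  fixes z :: "real \<Rightarrow> 'a::euclidean_space" and E :: "'a \<Rightarrow> 'a"
  assumes "linear E" and z': "\<And>s. (z has_vector_derivative E (z s)) (at s)"
    and "z 0 = 0" and "0 \<le> \<tau>"
  shows "z \<tau> = 0"
proof -
  obtain B where B: "\<And>x. norm (E x) \<le> B * norm x"
    using bounded_linear.bounded assms(1) linear_conv_bounded_linear by (metis mult.commute)
  define \<psi> where "\<psi> s = inner (z s) (z s) * exp (- (2 * B) * s)" for s
  have "\<psi> \<tau> \<le> \<psi> 0"
  proof (rule DERIV_nonpos_imp_nonincreasing[OF \<open>0 \<le> \<tau>\<close>])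
    fix s
    have "(\<psi> has_real_derivative 2 * (inner (z s) (E (z s)) - B * inner (z s) (z s)) * exp (- (2 * B) * s)) (at s)"
      unfolding \<psi>_def has_field_derivative_def
      by (rule has_derivative_eq_rhs, (rule derivative_eq_intros
          has_derivative_inner z'[unfolded has_vector_derivative_def] refl)+)
        (auto simp: fun_eq_iff inner_commute algebra_simps)
    moreover have "inner (z s) (E (z s)) \<le> B * inner (z s) (z s)"
    proof -
      have "inner (z s) (E (z s)) \<le> norm (z s) * norm (E (z s))" by (rule norm_cauchy_schwarz)
      also have "\<dots> \<le> norm (z s) * (B * norm (z s))" by (rule mult_left_mono[OF B]) simp
      finally show ?thesis by (simp add: power2_norm_eq_inner[symmetric] power2_eq_square mult_ac)
    qed
    ultimately show "\<exists>y. (\<psi> has_real_derivative y) (at s) \<and> y \<le> 0"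
      by (intro exI conjI) (auto intro!: mult_nonpos_nonneg)
  qed
  then have "inner (z \<tau>) (z \<tau>) * exp (- (2 * B) * \<tau>) \<le> 0"
    by (simp add: \<psi>_def \<open>z 0 = 0\<close>)
  then have "inner (z \<tau>) (z \<tau>) \<le> 0" by (simp add: mult_le_0_iff)
  then show ?thesis using inner_ge_zero[of "z \<tau>"] by simp
qed

lemma linear_ode_zero:
  fixes z :: "real \<Rightarrow> 'a::euclidean_space" and E :: "'a \<Rightarrow> 'a"
  assumes "linear E" and z': "\<And>s. (z has_vector_derivative E (z s)) (at s)" and "z 0 = 0"
  shows "z \<tau> = 0"
proof (cases "0 \<le> \<tau>")
  case True
  then show ?thesis using linear_ode_zero_forward assms by blast
next
  case False
  have "z (- (- \<tau>)) = 0"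
  proof (rule linear_ode_zero_forward[where E = "\<lambda>x. - E x" and z = "\<lambda>s. z (- s)"])
    show "linear (\<lambda>x. - E x)" using assms(1) by (simp add: linear_compose_neg)
    fix s
    have "((\<lambda>s. - s) has_vector_derivative - 1) (at s)"
      by (auto intro!: derivative_eq_intros simp: has_real_derivative_iff_has_vector_derivative[symmetric])
    from vector_diff_chain_at[OF this z']
    show "((\<lambda>s. z (- s)) has_vector_derivative - E (z (- s))) (at s)" by (simp add: o_def)
  qed (use False \<open>z 0 = 0\<close> in auto)
  then show ?thesis by simp
qed

lemma exp_op_add:
  fixes E :: "'a::euclidean_space \<Rightarrow> 'a"
  assumes "linear E"
  shows "exp_op E (\<sigma> + \<tau>) \<xi> = exp_op E \<sigma> (exp_op E \<tau> \<xi>)"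
proof -
  have "exp_op E (\<sigma> + \<tau>) \<xi> - exp_op E \<sigma> (exp_op E \<tau> \<xi>) = 0"
  proof (rule linear_ode_zero[OF assms, where z = "\<lambda>s. exp_op E (s + \<tau>) \<xi> - exp_op E s (exp_op E \<tau> \<xi>)"])
    fix s
    have "((\<lambda>s. s + \<tau>) has_vector_derivative 1) (at s)"
      by (auto intro!: derivative_eq_intros simp: has_real_derivative_iff_has_vector_derivative[symmetric])
    from vector_diff_chain_at[OF this has_vector_derivative_exp_op[OF assms, of \<xi> "s + \<tau>"]]
    have shift: "((\<lambda>s. exp_op E (s + \<tau>) \<xi>) has_vector_derivative E (exp_op E (s + \<tau>) \<xi>)) (at s)"
      by (simp add: o_def)
    show "((\<lambda>s. exp_op E (s + \<tau>) \<xi> - exp_op E s (exp_op E \<tau> \<xi>)) has_vector_derivative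
        E (exp_op E (s + \<tau>) \<xi> - exp_op E s (exp_op E \<tau> \<xi>))) (at s)"
      using has_vector_derivative_diff[OF shift has_vector_derivative_exp_op[OF assms]]
      by (simp add: linear_diff[OF assms])
  qed (simp add: exp_op_0)
  then show ?thesis by simp
qed

lemma linear_tpow: "linear E \<Longrightarrow> linear (tpow t E)"
  by (simp add: tpow_eq_exp_op linear_exp_op)

lemma tpow_1 [simp]: "tpow 1 E \<xi> = \<xi>"
  by (simp add: tpow_eq_exp_op exp_op_0)

lemma tpow_tpow:
  fixes E :: "'a::euclidean_space \<Rightarrow> 'a"
  assumes "linear E" "0 < s" "0 < t"
  shows "tpow s E (tpow t E \<xi>) = tpow (s * t) E \<xi>"
  using assms by (simp add: tpow_eq_exp_op ln_mult exp_op_add)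

lemma tpow_scaleR_operator:
  fixes E :: "'a::euclidean_space \<Rightarrow> 'a"
  assumes "linear E" "0 < t"
  shows "tpow t (\<lambda>x. c *\<^sub>R E x) \<xi> = tpow (t powr c) E \<xi>"
proof -
  have "((\<lambda>x. c *\<^sub>R E x) ^^ k) \<xi> = c ^ k *\<^sub>R (E ^^ k) \<xi>" for k
    by (induction k) (simp_all add: linear_cmul[OF assms(1)])
  then show ?thesis
    using assms(2) by (simp add: tpow_def ln_powr power_mult_distrib mult.commute)
qed

lemma has_vector_derivative_tpow:
  fixes E :: "'a::euclidean_space \<Rightarrow> 'a"
  assumes "linear E" "0 < t"
  shows "((\<lambda>t. tpow t E \<xi>) has_vector_derivative (1 / t) *\<^sub>R E (tpow t E \<xi>)) (at t)"
proof -
  have "(ln has_vector_derivative 1 / t) (at t)"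
    using DERIV_ln_divide[OF assms(2)] by (simp add: has_real_derivative_iff_has_vector_derivative)
  from vector_diff_chain_at[OF this has_vector_derivative_exp_op[OF assms(1), of \<xi> "ln t"]]
  show ?thesis by (simp add: o_def tpow_eq_exp_op)
qed

lemma continuous_on_tpow:
  fixes E :: "'a::euclidean_space \<Rightarrow> 'a"
  assumes "linear E"
  shows "continuous_on {0<..} (\<lambda>t. tpow t E \<xi>)"
  by (rule continuous_at_imp_continuous_on)
    (auto intro: has_vector_derivative_continuous[OF has_vector_derivative_tpow[OF assms]])

section \<open>Matrices of linear maps and Liouville's formula\<close>

text \<open>Matrices are taken with respect to a fixed enumeration of \<open>Basis\<close>, so that the determinant of
  \<open>Jordan_Normal_Form\<close> applies.\<close>

definition basis_list :: "'a::euclidean_space list" where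
  "basis_list = (SOME xs. set xs = Basis \<and> distinct xs)"

lemma set_basis_list [simp]: "set (basis_list :: 'a::euclidean_space list) = Basis"
  and distinct_basis_list: "distinct (basis_list :: 'a list)"
proof -
  have "\<exists>xs. set xs = (Basis :: 'a set) \<and> distinct xs" by (rule finite_distinct_list) simp
  then have "set (basis_list :: 'a list) = Basis \<and> distinct (basis_list :: 'a list)"
    unfolding basis_list_def by (rule someI_ex)
  then show "set (basis_list :: 'a list) = Basis" "distinct (basis_list :: 'a list)" by auto
qed

lemma length_basis_list [simp]: "length (basis_list :: 'a::euclidean_space list) = DIM('a)"
  using distinct_card[OF distinct_basis_list[where 'a = 'a]] by simp

lemma basis_list_nth_in_Basis: "i < DIM('a) \<Longrightarrow> (basis_list :: 'a::euclidean_space list) ! i \<in> Basis"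
  using nth_mem[of i "basis_list :: 'a list"] by simp

lemma inner_basis_list_nth:
  "i < DIM('a) \<Longrightarrow> j < DIM('a) \<Longrightarrow>
    inner ((basis_list :: 'a::euclidean_space list) ! i) (basis_list ! j) = (if i = j then 1 else 0)"
  using distinct_basis_list[where 'a = 'a] basis_list_nth_in_Basis[where 'a = 'a]
  by (auto simp: inner_Basis nth_eq_iff_index_eq)

lemma sum_Basis_eq_sum_basis_list:
  "(\<Sum>b\<in>(Basis :: 'a::euclidean_space set). f b) = (\<Sum>k<DIM('a). f (basis_list ! k))"
proof -
  have "bij_betw ((!) (basis_list :: 'a list)) {..<DIM('a)} Basis"
    by (rule bij_betw_nth[OF distinct_basis_list]) simp_all
  then show ?thesis by (rule sum.reindex_bij_betw[symmetric])
qed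

definition op_matrix :: "('a::euclidean_space \<Rightarrow> 'a) \<Rightarrow> real mat" where
  "op_matrix L = mat DIM('a) DIM('a) (\<lambda>(i, j). inner (L (basis_list ! j)) (basis_list ! i))"

lemma op_matrix_carrier: "op_matrix (L :: 'a::euclidean_space \<Rightarrow> 'a) \<in> carrier_mat DIM('a) DIM('a)"
  by (simp add: op_matrix_def)

lemma dim_op_matrix [simp]:
  "dim_row (op_matrix (L :: 'a::euclidean_space \<Rightarrow> 'a)) = DIM('a)"
  "dim_col (op_matrix (L :: 'a::euclidean_space \<Rightarrow> 'a)) = DIM('a)"
  by (simp_all add: op_matrix_def)

lemma op_matrix_index [simp]:
  "i < DIM('a) \<Longrightarrow> j < DIM('a) \<Longrightarrow>
    op_matrix (L :: 'a::euclidean_space \<Rightarrow> 'a) $$ (i, j) = inner (L (basis_list ! j)) (basis_list ! i)"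
  by (simp add: op_matrix_def)

lemma linear_apply_basis_list_expansion:
  fixes L :: "'a::euclidean_space \<Rightarrow> 'a"
  assumes "linear L"
  shows "L x = (\<Sum>k<DIM('a). inner x (basis_list ! k) *\<^sub>R L (basis_list ! k))"
  by (subst euclidean_representation[symmetric, of x])
    (simp add: sum_Basis_eq_sum_basis_list linear_sum[OF assms] linear_cmul[OF assms])

lemma op_matrix_comp:
  fixes L M :: "'a::euclidean_space \<Rightarrow> 'a"
  assumes "linear L"
  shows "op_matrix (\<lambda>x. L (M x)) = op_matrix L * op_matrix M"
proof (rule eq_matI)
  fix i j assume "i < dim_row (op_matrix L * op_matrix M)" "j < dim_col (op_matrix L * op_matrix M)"
  then have i: "i < DIM('a)" and j: "j < DIM('a)" by auto
  have "inner (L (M (basis_list ! j))) (basis_list ! i) =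
      (\<Sum>k<DIM('a). inner (L (basis_list ! k)) (basis_list ! i) * inner (M (basis_list ! j)) (basis_list ! k))"
    by (subst linear_apply_basis_list_expansion[OF assms]) (simp add: inner_sum_left mult.commute)
  then show "op_matrix (\<lambda>x. L (M x)) $$ (i, j) = (op_matrix L * op_matrix M) $$ (i, j)"
    using i j by (simp add: scalar_prod_def lessThan_atLeast0)
qed auto

lemma op_matrix_id: "op_matrix (\<lambda>x::'a::euclidean_space. x) = 1\<^sub>m DIM('a)"
  by (rule eq_matI) (auto simp: inner_basis_list_nth)

lemma abs_op_matrix_index_le:
  fixes L :: "'a::euclidean_space \<Rightarrow> 'a"
  assumes "\<And>x. norm (L x) \<le> c * norm x" "i < DIM('a)" "j < DIM('a)"
  shows "\<bar>op_matrix L $$ (i, j)\<bar> \<le> c"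
proof -
  have "\<bar>op_matrix L $$ (i, j)\<bar> \<le> norm (L (basis_list ! j)) * norm (basis_list ! i :: 'a)"
    using assms(2,3) by (simp add: Cauchy_Schwarz_ineq2)
  also have "\<dots> \<le> c"
    using assms(1)[of "basis_list ! j"] basis_list_nth_in_Basis[where 'a = 'a] assms(2,3) by simp
  finally show ?thesis .
qed

lemma norm_le_of_op_matrix_index:
  fixes L :: "'a::euclidean_space \<Rightarrow> 'a"
  assumes "linear L" and bound: "\<And>i j. i < DIM('a) \<Longrightarrow> j < DIM('a) \<Longrightarrow> \<bar>op_matrix L $$ (i, j)\<bar> \<le> c"
  shows "norm (L x) \<le> real DIM('a) * real DIM('a) * c * norm x"
proof -
  have coord: "\<bar>inner (L x) (basis_list ! i)\<bar> \<le> real DIM('a) * c * norm x" if i: "i < DIM('a)" for i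
  proof -
    have "\<bar>inner (L x) (basis_list ! i)\<bar> \<le> (\<Sum>k<DIM('a). \<bar>inner x (basis_list ! k)\<bar> * \<bar>op_matrix L $$ (i, k)\<bar>)"
      by (subst linear_apply_basis_list_expansion[OF assms(1)])
        (simp add: inner_sum_left i abs_mult[symmetric] sum_abs)
    also have "\<dots> \<le> (\<Sum>k<DIM('a). norm x * c)"
      using Basis_le_norm basis_list_nth_in_Basis[where 'a = 'a] bound i
      by (intro sum_mono mult_mono) auto
    finally show ?thesis by (simp add: mult_ac)
  qed
  have "norm (L x) \<le> (\<Sum>b\<in>Basis. \<bar>inner (L x) b\<bar>)" by (rule norm_le_l1)
  also have "\<dots> \<le> (\<Sum>i<DIM('a). real DIM('a) * c * norm x)"
    unfolding sum_Basis_eq_sum_basis_list by (rule sum_mono) (use coord in auto)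
  finally show ?thesis by simp
qed

lemma abs_det_le_fact:
  fixes A :: "real mat"
  assumes A: "A \<in> carrier_mat n n" and entries: "\<And>i j. i < n \<Longrightarrow> j < n \<Longrightarrow> \<bar>A $$ (i, j)\<bar> \<le> 1"
  shows "\<bar>Determinant.det A\<bar> \<le> fact n"
proof -
  have "\<bar>Determinant.det A\<bar> \<le> (\<Sum>p | p permutes {0..<n}. \<bar>signof p * (\<Prod>i=0..<n. A $$ (i, p i))\<bar>)"
    unfolding det_def'[OF A] by (rule sum_abs)
  also have "\<dots> \<le> (\<Sum>p | p permutes {0..<n}. 1)"
  proof (rule sum_mono)
    fix p assume "p \<in> {p. p permutes {0..<n}}"
    then have "(\<Prod>i=0..<n. \<bar>A $$ (i, p i)\<bar>) \<le> 1"
      by (intro prod_le_1) (auto intro!: entries simp: permutes_in_image)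
    moreover have "\<bar>(signof p :: real)\<bar> = 1" by (cases rule: sign_cases[of p]) auto
    ultimately show "\<bar>signof p * (\<Prod>i=0..<n. A $$ (i, p i))\<bar> \<le> 1"
      by (simp add: abs_mult abs_prod)
  qed
  also have "\<dots> = fact n" using card_permutations[of "{0..<n}" n] by simp
  finally show ?thesis .
qed

text \<open>Cramer's rule: \<open>A = det A \<cdot> adj N\<close> when \<open>N A = 1\<close>, and the cofactors of \<open>N\<close> are bounded
  by \<open>abs_det_le_fact\<close>.\<close>

lemma abs_index_le_of_left_inverse:
  fixes A N :: "real mat"
  assumes A: "A \<in> carrier_mat n n" and N: "N \<in> carrier_mat n n" and NA: "N * A = 1\<^sub>m n"
    and N_entries: "\<And>i j. i < n \<Longrightarrow> j < n \<Longrightarrow> \<bar>N $$ (i, j)\<bar> \<le> 1"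
    and "i < n" "j < n"
  shows "\<bar>A $$ (i, j)\<bar> \<le> \<bar>Determinant.det A\<bar> * fact n"
proof -
  have adj: "adj_mat N \<in> carrier_mat n n" using adj_mat(1)[OF N] .
  have "adj_mat N = (adj_mat N * N) * A" using adj N A NA by (simp add: assoc_mult_mat[of _ n n])
  also have "\<dots> = Determinant.det N \<cdot>\<^sub>m A"
    using adj_mat(3)[OF N] A by (simp add: mult_smult_assoc_mat[OF one_carrier_mat A])
  finally have "adj_mat N $$ (i, j) = Determinant.det N * A $$ (i, j)" using A \<open>i < n\<close> \<open>j < n\<close> by simp
  moreover have "Determinant.det N * Determinant.det A = 1" using det_mult[OF N A] NA by simp
  ultimately have A_ij: "A $$ (i, j) = Determinant.det A * adj_mat N $$ (i, j)"
    by (metis mult.assoc mult.commute mult_1)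
  have "\<bar>adj_mat N $$ (i, j)\<bar> = \<bar>Determinant.det (mat_delete N j i)\<bar>"
    using N \<open>i < n\<close> \<open>j < n\<close> by (simp add: adj_mat_def cofactor_def abs_mult)
  also have "\<dots> \<le> fact (n - 1)"
    using N by (intro abs_det_le_fact mat_delete_carrier) (auto simp: mat_delete_def N_entries)
  also have "\<dots> \<le> fact n" by (rule fact_mono) simp
  finally show ?thesis unfolding A_ij abs_mult by (intro mult_left_mono) auto
qed

lemma permutes_moves_other:
  assumes p: "p permutes S" and "p \<noteq> id"
  shows "\<exists>j\<in>S - {i}. p j \<noteq> j"
proof -
  obtain j where j: "p j \<noteq> j" using \<open>p \<noteq> id\<close> by (auto simp: fun_eq_iff)
  have "j \<in> S" using j p by (meson permutes_not_in)
  moreover have "p j \<in> S" using \<open>j \<in> S\<close> by (rule permutes_in_image[OF p, THEN iffD2])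
  moreover have "p (p j) \<noteq> p j" using j permutes_inj[OF p] by (metis injD)
  ultimately show ?thesis using j by (metis Diff_iff singletonD)
qed

lemma leibniz_term_derivative_at_identity:
  fixes m c :: "nat \<Rightarrow> nat \<Rightarrow> real"
  assumes p: "p permutes {0..<n}" and m: "\<And>j k. j < n \<Longrightarrow> k < n \<Longrightarrow> m j k = (if j = k then 1 else 0)"
  shows "signof p * (\<Sum>i\<in>{0..<n}. c i (p i) * (\<Prod>j\<in>{0..<n} - {i}. m j (p j)))
    = (if p = id then (\<Sum>i\<in>{0..<n}. c i i) else 0)"
proof (cases "p = id")
  case True
  have "(\<Prod>j\<in>{0..<n} - {i}. m j j) = 1" for i by (intro prod.neutral) (auto simp: m)
  then show ?thesis using True by simp
next
  case False
  have "(\<Prod>j\<in>{0..<n} - {i}. m j (p j)) = 0" for i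
  proof -
    obtain j where "j \<in> {0..<n} - {i}" "p j \<noteq> j" using permutes_moves_other[OF p False] by blast
    moreover have "p j < n" using \<open>j \<in> {0..<n} - {i}\<close> p by (auto simp: permutes_in_image)
    ultimately show ?thesis by (intro prod_zero bexI[where x = j]) (auto simp: m)
  qed
  then show ?thesis using False by (simp del: prod_zero_iff)
qed

lemma det_op_matrix_exp_op_add:
  fixes E :: "'a::euclidean_space \<Rightarrow> 'a"
  assumes "linear E"
  shows "Determinant.det (op_matrix (exp_op E (\<sigma> + \<tau>))) =
    Determinant.det (op_matrix (exp_op E \<sigma>)) * Determinant.det (op_matrix (exp_op E \<tau>))"
proof -
  have "exp_op E (\<sigma> + \<tau>) = (\<lambda>x. exp_op E \<sigma> (exp_op E \<tau> x))"
    by (rule ext) (rule exp_op_add[OF assms])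
  then have "op_matrix (exp_op E (\<sigma> + \<tau>)) = op_matrix (exp_op E \<sigma>) * op_matrix (exp_op E \<tau>)"
    using op_matrix_comp[OF linear_exp_op[OF assms]] by metis
  then show ?thesis by (simp only: det_mult[OF op_matrix_carrier op_matrix_carrier])
qed

lemma has_field_derivative_det_op_matrix_exp_op_0:
  fixes E :: "'a::euclidean_space \<Rightarrow> 'a"
  assumes "linear E"
  shows "((\<lambda>\<tau>. Determinant.det (op_matrix (exp_op E \<tau>))) has_field_derivative trace_op E) (at 0)"
proof -
  let ?n = "DIM('a)" and ?b = "basis_list :: 'a list"
  define m where "m i k \<tau> = inner (exp_op E \<tau> (?b ! k)) (?b ! i)" for i k \<tau>
  define m' where "m' i k = inner (E (?b ! k)) (?b ! i)" for i k
  have m0: "m j k 0 = (if j = k then 1 else 0)" if "j < ?n" "k < ?n" for j k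
    using that by (simp add: m_def exp_op_0 inner_basis_list_nth)
  have dm: "(m i k has_field_derivative m' i k) (at 0)" for i k
    using bounded_linear.has_vector_derivative[OF bounded_linear_inner_left
        has_vector_derivative_exp_op[OF assms, of "?b ! k" 0], of "?b ! i"]
    by (simp add: m_def[abs_def] m'_def exp_op_0 has_real_derivative_iff_has_vector_derivative)
  have leibniz: "Determinant.det (op_matrix (exp_op E \<tau>)) =
      (\<Sum>p | p permutes {0..<?n}. signof p * (\<Prod>i=0..<?n. m i (p i) \<tau>))" for \<tau>
    unfolding det_def'[OF op_matrix_carrier]
    by (intro sum.cong refl arg_cong2[where f = "(*)"] prod.cong)
      (auto simp: m_def permutes_in_image)
  have "((\<lambda>\<tau>. \<Sum>p | p permutes {0..<?n}. signof p * (\<Prod>i=0..<?n. m i (p i) \<tau>)) has_field_derivative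
      (\<Sum>p | p permutes {0..<?n}. signof p * (\<Sum>i\<in>{0..<?n}. m' i (p i) * (\<Prod>j\<in>{0..<?n} - {i}. m j (p j) 0))))
      (at 0)"
    by (intro DERIV_sum DERIV_cmult has_field_derivative_prod dm)
  also have "(\<Sum>p | p permutes {0..<?n}. signof p * (\<Sum>i\<in>{0..<?n}. m' i (p i) * (\<Prod>j\<in>{0..<?n} - {i}. m j (p j) 0)))
      = (\<Sum>i\<in>{0..<?n}. m' i i)"
    by (simp add: leibniz_term_derivative_at_identity[where m = "\<lambda>j k. m j k 0", OF _ m0]
        sum.delta permutes_id finite_permutations)
  also have "\<dots> = trace_op E"
    by (simp add: trace_op_def sum_Basis_eq_sum_basis_list m'_def lessThan_atLeast0)
  finally show ?thesis unfolding leibniz .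
qed

lemma det_op_matrix_exp_op:
  fixes E :: "'a::euclidean_space \<Rightarrow> 'a"
  assumes "linear E"
  shows "Determinant.det (op_matrix (exp_op E \<tau>)) = exp (trace_op E * \<tau>)"
proof -
  define D where "D \<tau> = Determinant.det (op_matrix (exp_op E \<tau>))" for \<tau>
  have D_add: "D (\<sigma> + \<tau>) = D \<sigma> * D \<tau>" for \<sigma> \<tau>
    by (simp add: D_def det_op_matrix_exp_op_add[OF assms])
  have D_0: "D 0 = 1"
  proof -
    have "exp_op E 0 = (\<lambda>x. x)" by (simp add: fun_eq_iff exp_op_0)
    then show ?thesis by (simp add: D_def op_matrix_id)
  qed
  have D': "(D has_field_derivative trace_op E * D \<tau>) (at \<tau>)" for \<tau>
  proof -
    have "((\<lambda>h. D \<tau> * D h) has_field_derivative D \<tau> * trace_op E) (at 0)"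
      unfolding D_def by (intro DERIV_cmult has_field_derivative_det_op_matrix_exp_op_0[OF assms])
    then have "((\<lambda>h. D (h + \<tau>)) has_field_derivative D \<tau> * trace_op E) (at 0)"
      by (simp add: D_add mult.commute)
    then show ?thesis using DERIV_shift[of D _ 0 \<tau>] by (simp add: mult.commute)
  qed
  have "((\<lambda>s. D s * exp (- trace_op E * s)) has_real_derivative 0) (at s)" for s
  proof -
    have "((\<lambda>s. exp (- trace_op E * s)) has_real_derivative exp (- trace_op E * s) * (- trace_op E)) (at s)"
      by (auto intro!: derivative_eq_intros)
    from DERIV_mult[OF D' this] show ?thesis by (simp add: algebra_simps)
  qed
  then have "D \<tau> * exp (- trace_op E * \<tau>) = D 0 * exp (- trace_op E * 0)"
    by (intro DERIV_isconst_all allI)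
  then have "D \<tau> = exp (trace_op E * \<tau>)" using D_0 by (simp add: exp_minus field_simps)
  then show ?thesis by (simp add: D_def)
qed

lemma det_op_matrix_tpow:
  fixes E :: "'a::euclidean_space \<Rightarrow> 'a"
  assumes "linear E" "0 < s"
  shows "Determinant.det (op_matrix (tpow s E)) = s powr trace_op E"
  using assms by (simp add: tpow_eq_exp_op det_op_matrix_exp_op powr_def mult.commute)

section \<open>Homogeneous gauges\<close>

lemma linear_norm_le_of_unit_ball:
  fixes L :: "'a::real_normed_vector \<Rightarrow> 'b::real_normed_vector"
  assumes "linear L" and unit: "\<And>x. norm x \<le> 1 \<Longrightarrow> norm (L x) \<le> c"
  shows "norm (L x) \<le> c * norm x"
proof (cases "x = 0")
  case True
  then show ?thesis using linear_0[OF assms(1)] by simp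
next
  case False
  have "L x = norm x *\<^sub>R L (x /\<^sub>R norm x)"
    using False by (simp add: linear_cmul[OF assms(1)])
  moreover have "norm (L (x /\<^sub>R norm x)) \<le> c" using False by (intro unit) simp
  ultimately show ?thesis by (simp add: mult.commute[of c] mult_left_mono)
qed

lemma eventually_strongly_subhomogeneous_2:
  assumes "strongly_subhomogeneous Qt E 2" "compact S" "0 < \<epsilon>"
  shows "\<forall>\<^sub>F t in at_right 0. \<forall>\<eta>\<in>S.
    \<bar>deriv (\<lambda>s. Qt (tpow s E \<eta>)) t\<bar> \<le> \<epsilon> \<and> t * \<bar>deriv (deriv (\<lambda>s. Qt (tpow s E \<eta>))) t\<bar> \<le> \<epsilon>"
proof -
  obtain \<tau> where "0 < \<tau>" and "\<forall>k\<le>2. \<forall>t. 0 < t \<and> t < \<tau> \<longrightarrow> (\<forall>\<eta>\<in>S.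
      \<bar>t ^ k * (deriv ^^ k) (\<lambda>s. Qt (tpow s E \<eta>)) t\<bar> \<le> \<epsilon> * t)"
    using assms(1)[unfolded strongly_subhomogeneous_def, rule_format, OF assms(3,2)] by blast
  then have \<tau>: "\<bar>t ^ k * (deriv ^^ k) (\<lambda>s. Qt (tpow s E \<eta>)) t\<bar> \<le> \<epsilon> * t"
    if "k \<le> 2" "0 < t" "t < \<tau>" "\<eta> \<in> S" for k t \<eta>
    using that by blast
  have "\<bar>deriv (\<lambda>s. Qt (tpow s E \<eta>)) t\<bar> \<le> \<epsilon> \<and> t * \<bar>deriv (deriv (\<lambda>s. Qt (tpow s E \<eta>))) t\<bar> \<le> \<epsilon>"
    if "0 < t" "t < \<tau>" "\<eta> \<in> S" for t \<eta>
    using \<tau>[of 1 t \<eta>] \<tau>[of 2 t \<eta>] that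
    by (simp add: abs_mult numeral_2_eq_2 power2_eq_square mult.assoc)
  then show ?thesis unfolding eventually_at_right_field using \<open>0 < \<tau>\<close> by blast
qed

locale homogeneous_gauge =
  fixes P :: "'a::euclidean_space \<Rightarrow> real" and E :: "'a \<Rightarrow> 'a"
  assumes continuous: "continuous_on UNIV P"
    and nonneg: "0 \<le> P x"
    and zero_iff: "P x = 0 \<longleftrightarrow> x = 0"
    and E_Exps: "E \<in> Exps P"
begin

lemma linear_E: "linear E"
  using E_Exps by (simp add: Exps_def)

lemma homogeneous: "0 < t \<Longrightarrow> P (tpow t E \<xi>) = t * P \<xi>"
  using E_Exps by (simp add: Exps_def homogeneous_wrt_def)

text \<open>A small vector cannot reach the unit sphere along \<open>t \<mapsto> t^E x\<close>, \<open>0 < t \<le> 1\<close>, since \<open>P\<close>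
  only decreases along the way while it is bounded below on the sphere.\<close>

lemma tpow_bounded_near_0: "\<exists>M. \<forall>t x. 0 < t \<longrightarrow> t \<le> 1 \<longrightarrow> norm (tpow t E x) \<le> M * norm x"
proof -
  obtain b :: 'a where "b \<in> Basis" using nonempty_Basis by blast
  then have "sphere (0::'a) 1 \<noteq> {}" by (auto intro!: exI[of _ b])
  then obtain x0 where x0: "x0 \<in> sphere 0 1" and min: "\<And>y. y \<in> sphere 0 1 \<Longrightarrow> P x0 \<le> P y"
    using continuous_attains_inf[OF compact_sphere _ continuous_on_subset[OF continuous]] by blast
  have "0 < P x0" using x0 zero_iff[of x0] nonneg[of x0] by fastforce
  moreover have "isCont P 0" using continuous by (simp add: continuous_on_eq_continuous_at)
  ultimately obtain \<delta> where "0 < \<delta>" and \<delta>0: "\<And>x. dist x 0 < \<delta> \<Longrightarrow> dist (P x) (P 0) < P x0"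
    unfolding continuous_at_eps_delta by blast
  have \<delta>: "P x < P x0" if "norm x < \<delta>" for x
    using \<delta>0[of x] that zero_iff[of 0] by (simp add: dist_norm abs_less_iff)
  define \<delta>' where "\<delta>' = min \<delta> 1"
  have small: "norm (tpow t E x) < 1" if x: "norm x < \<delta>'" and t: "0 < t" "t \<le> 1" for t x
  proof (rule ccontr)
    assume "\<not> norm (tpow t E x) < 1"
    moreover have "norm (tpow 1 E x) \<le> 1" using x by (simp add: \<delta>'_def)
    moreover have "continuous_on {t..1} (\<lambda>s. norm (tpow s E x))"
      using t by (intro continuous_on_norm continuous_on_subset[OF continuous_on_tpow[OF linear_E]]) auto
    ultimately obtain s where s: "t \<le> s" "s \<le> 1" "norm (tpow s E x) = 1"
      using IVT2'[of "\<lambda>s. norm (tpow s E x)" 1 1 t] t by force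
    then have "P x0 \<le> s * P x" using min homogeneous t by fastforce
    also have "\<dots> \<le> P x" using s t nonneg[of x] by (intro mult_left_le_one_le) auto
    also have "\<dots> < P x0" using \<delta> x by (simp add: \<delta>'_def)
    finally show False by simp
  qed
  have "norm (tpow t E x) \<le> 2 / \<delta>' * norm x" if "0 < t" "t \<le> 1" for t x
  proof (rule linear_norm_le_of_unit_ball[OF linear_tpow[OF linear_E]])
    fix x :: 'a assume "norm x \<le> 1"
    moreover have "0 < \<delta>'" using \<open>0 < \<delta>\<close> by (simp add: \<delta>'_def)
    ultimately have "norm ((\<delta>' / 2) *\<^sub>R x) < \<delta>'"
      by (simp add: mult_left_le[of "norm x" "\<delta>' / 2", THEN le_less_trans])
    then have "norm (tpow t E ((\<delta>' / 2) *\<^sub>R x)) < 1" using small that by blast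
    then show "norm (tpow t E x) \<le> 2 / \<delta>'"
      using \<open>0 < \<delta>\<close> by (simp add: linear_cmul[OF linear_tpow[OF linear_E]] \<delta>'_def field_simps)
  qed
  then show ?thesis by blast
qed

text \<open>\<open>P (t^E x) = t P x\<close>, while \<open>P\<close> is bounded above on the unit ball and below on the annulus
  \<open>\<epsilon> \<le> |y| \<le> |M|\<close>: for small \<open>t\<close> the image of the unit ball misses the annulus.\<close>

lemma eventually_norm_tpow_le:
  assumes "0 < \<epsilon>"
  shows "\<forall>\<^sub>F t in at_right 0. \<forall>x. norm (tpow t E x) \<le> \<epsilon> * norm x"
proof -
  obtain M where M: "\<And>t x. 0 < t \<Longrightarrow> t \<le> 1 \<Longrightarrow> norm (tpow t E x) \<le> M * norm x"
    using tpow_bounded_near_0 by blast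
  define A where "A = {y::'a. \<epsilon> \<le> norm y \<and> norm y \<le> \<bar>M\<bar>}"
  have "compact A"
    unfolding A_def compact_eq_bounded_closed
    by (auto simp: bounded_iff intro!: closed_Collect_conj closed_Collect_le continuous_intros)
  obtain m where m: "0 < m" "\<And>y. y \<in> A \<Longrightarrow> m \<le> P y"
  proof (cases "A = {}")
    case False
    then obtain y0 where "y0 \<in> A" "\<And>y. y \<in> A \<Longrightarrow> P y0 \<le> P y"
      using continuous_attains_inf[OF \<open>compact A\<close> _ continuous_on_subset[OF continuous]] by blast
    moreover have "0 < P y0"
      using \<open>y0 \<in> A\<close> assms zero_iff[of y0] nonneg[of y0] by (auto simp: A_def)
    ultimately show ?thesis using that by blast
  qed (auto intro: that[of 1])
  obtain x1 where x1: "\<And>y. y \<in> cball 0 1 \<Longrightarrow> P y \<le> P x1"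
    using continuous_attains_sup[OF compact_cball _ continuous_on_subset[OF continuous], of 0 1]
    by fastforce
  define t0 where "t0 = min 1 (m / (P x1 + 1))"
  have "0 < t0" "t0 \<le> 1" using m nonneg[of x1] by (simp_all add: t0_def)
  have "norm (tpow t E x) \<le> \<epsilon> * norm x" if "0 < t" "t < t0" for t x
  proof (rule linear_norm_le_of_unit_ball[OF linear_tpow[OF linear_E]])
    fix x :: 'a assume "norm x \<le> 1"
    have "P (tpow t E x) = t * P x" using homogeneous \<open>0 < t\<close> by simp
    also have "\<dots> \<le> t0 * P x1"
      using x1[of x] \<open>norm x \<le> 1\<close> that nonneg[of x] by (intro mult_mono) auto
    also have "\<dots> < m"
      using m nonneg[of x1] by (simp add: t0_def min_def field_simps)
    finally have "tpow t E x \<notin> A" using m(2) by force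
    moreover have "norm (tpow t E x) \<le> \<bar>M\<bar> * norm x"
      using M[of t x] that \<open>t0 \<le> 1\<close> by (smt (verit) mult_right_mono norm_ge_zero)
    then have "norm (tpow t E x) \<le> \<bar>M\<bar>"
      using \<open>norm x \<le> 1\<close> by (smt (verit) abs_ge_zero mult_left_le)
    ultimately show "norm (tpow t E x) \<le> \<epsilon>" by (auto simp: A_def)
  qed
  then show ?thesis
    unfolding eventually_at_right_field using \<open>0 < t0\<close> by blast
qed

lemma eventually_norm_tpow_inverse_le:
  assumes "0 < \<epsilon>"
  shows "\<forall>\<^sub>F s in at_top. 0 < s \<and> (\<forall>x. norm (tpow (1 / s) E x) \<le> \<epsilon> * norm x)"
  using eventually_compose_filterlim[OF eventually_norm_tpow_le[OF assms] filterlim_inverse_at_right_top]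
    eventually_gt_at_top[of 0]
  by eventually_elim (simp add: divide_inverse)

text \<open>Since \<open>(1/s)^E\<close> is a contraction for large \<open>s\<close>, Cramer's rule bounds the entries of its
  inverse \<open>s^E\<close> by \<open>det s^E = s^(tr E)\<close>.\<close>

lemma tpow_growth:
  "\<exists>C>0. \<forall>\<^sub>F s in at_top. \<forall>x. norm (tpow s E x) \<le> C * s powr trace_op E * norm x"
proof (intro exI conjI)
  let ?n = "DIM('a)"
  show "(0::real) < real ?n * real ?n * fact ?n" by simp
  have "\<forall>\<^sub>F s in at_top. 0 < s \<and> (\<forall>x. norm (tpow (1 / s) E x) \<le> 1 * norm x)"
    by (rule eventually_norm_tpow_inverse_le) simp
  then show "\<forall>\<^sub>F s in at_top. \<forall>x. norm (tpow s E x) \<le> real ?n * real ?n * fact ?n * s powr trace_op E * norm x"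
  proof eventually_elim
    case (elim s)
    then have "0 < s" and contraction: "\<And>x. norm (tpow (1 / s) E x) \<le> 1 * norm x" by auto
    define A where "A = op_matrix (tpow s E)"
    define N where "N = op_matrix (tpow (1 / s) E)"
    have inverse: "(\<lambda>x. tpow (1 / s) E (tpow s E x)) = (\<lambda>x. x)"
      using \<open>0 < s\<close> by (simp add: fun_eq_iff tpow_tpow[OF linear_E])
    have "N * A = op_matrix (\<lambda>x. tpow (1 / s) E (tpow s E x))"
      unfolding A_def N_def by (rule op_matrix_comp[OF linear_tpow[OF linear_E], symmetric])
    then have NA: "N * A = 1\<^sub>m ?n" unfolding inverse op_matrix_id .
    have N_entries: "\<bar>N $$ (i, j)\<bar> \<le> 1" if "i < ?n" "j < ?n" for i j
      unfolding N_def using abs_op_matrix_index_le[OF contraction that] .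
    have "\<bar>A $$ (i, j)\<bar> \<le> \<bar>Determinant.det A\<bar> * fact ?n" if "i < ?n" "j < ?n" for i j
      using abs_index_le_of_left_inverse[OF _ _ NA N_entries that] by (simp add: A_def N_def op_matrix_carrier)
    moreover have "Determinant.det A = s powr trace_op E"
      using det_op_matrix_tpow[OF linear_E \<open>0 < s\<close>] by (simp add: A_def)
    ultimately have "\<bar>A $$ (i, j)\<bar> \<le> s powr trace_op E * fact ?n" if "i < ?n" "j < ?n" for i j
      using that by simp
    then have "norm (tpow s E x) \<le> real ?n * real ?n * (s powr trace_op E * fact ?n) * norm x" for x
      by (intro norm_le_of_op_matrix_index[OF linear_tpow[OF linear_E]]) (simp add: A_def)
    then show ?case by (simp add: mult_ac)
  qed
qed

lemma trace_op_pos: "0 < trace_op E"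
proof (rule ccontr)
  assume "\<not> 0 < trace_op E"
  obtain C where "0 < C" and grow: "\<forall>\<^sub>F s in at_top. \<forall>x. norm (tpow s E x) \<le> C * s powr trace_op E * norm x"
    using tpow_growth by blast
  have "0 < 1 / (2 * C)" using \<open>0 < C\<close> by simp
  have "\<forall>\<^sub>F s in at_top. 1 \<le> s \<and> (\<forall>x. norm (tpow s E x) \<le> C * s powr trace_op E * norm x)
      \<and> (\<forall>x. norm (tpow (1 / s) E x) \<le> 1 / (2 * C) * norm x)"
    using eventually_ge_at_top[of 1] grow eventually_norm_tpow_inverse_le[OF \<open>0 < 1 / (2 * C)\<close>]
    by eventually_elim auto
  then obtain s where "1 \<le> s" and grow_s: "\<And>x. norm (tpow s E x) \<le> C * s powr trace_op E * norm x"
    and shrink: "\<And>x. norm (tpow (1 / s) E x) \<le> 1 / (2 * C) * norm x"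
    unfolding eventually_at_top_linorder by blast
  obtain b :: 'a where b: "b \<in> Basis" using nonempty_Basis by blast
  have "b = tpow s E (tpow (1 / s) E b)" using \<open>1 \<le> s\<close> by (simp add: tpow_tpow[OF linear_E])
  then have "norm b \<le> C * s powr trace_op E * norm (tpow (1 / s) E b)"
    using grow_s by metis
  also have "\<dots> \<le> C * s powr trace_op E * (1 / (2 * C) * norm b)"
    using shrink \<open>0 < C\<close> by (intro mult_left_mono) auto
  also have "\<dots> = s powr trace_op E / 2" using \<open>0 < C\<close> b by simp
  also have "\<dots> \<le> 1 / 2"
    using \<open>\<not> 0 < trace_op E\<close> \<open>1 \<le> s\<close> powr_mono[of "trace_op E" 0 s] by simp
  finally show False using b by simp
qed

lemma eventually_norm_tpow_le_sublinear:
  assumes "trace_op E < 1" "0 < \<epsilon>"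
  shows "\<forall>\<^sub>F s in at_top. \<forall>x. norm (tpow s E x) \<le> \<epsilon> * s * norm x"
proof -
  obtain C where "0 < C" and grow: "\<forall>\<^sub>F s in at_top. \<forall>x. norm (tpow s E x) \<le> C * s powr trace_op E * norm x"
    using tpow_growth by blast
  have "((\<lambda>s. s powr (trace_op E - 1)) \<longlongrightarrow> 0) at_top"
    using assms(1) by (intro tendsto_neg_powr filterlim_ident) auto
  then have "\<forall>\<^sub>F s in at_top. s powr (trace_op E - 1) < \<epsilon> / C"
    using assms(2) \<open>0 < C\<close> by (intro order_tendstoD) auto
  with grow eventually_gt_at_top[of 0] show ?thesis
  proof eventually_elim
    case (elim s)
    then have "C * s powr trace_op E \<le> \<epsilon> * s"
      using \<open>0 < C\<close> by (simp add: powr_diff field_simps)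
    then show ?case using elim by (meson mult_right_mono norm_ge_zero order_trans)
  qed
qed

lemma eventually_tpow_in_open:
  assumes "open U" "0 \<in> U" "bounded S"
  shows "\<forall>\<^sub>F t in at_right 0. \<forall>\<eta>\<in>S. tpow t E \<eta> \<in> U"
proof -
  obtain r where "0 < r" "ball 0 r \<subseteq> U" using assms(1,2) open_contains_ball by blast
  obtain R where "0 < R" and R: "\<And>\<eta>. \<eta> \<in> S \<Longrightarrow> norm \<eta> \<le> R" using assms(3) by (auto simp: bounded_pos)
  have "0 < r / (2 * R)" using \<open>0 < r\<close> \<open>0 < R\<close> by simp
  from eventually_norm_tpow_le[OF this] show ?thesis
  proof eventually_elim
    case (elim t)
    have "norm (tpow t E \<eta>) < r" if "\<eta> \<in> S" for \<eta>
    proof -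
      have "norm (tpow t E \<eta>) \<le> r / (2 * R) * R"
        using elim R[OF that] \<open>0 < r\<close> \<open>0 < R\<close> by (smt (verit) divide_pos_pos mult_left_mono)
      then show ?thesis using \<open>0 < r\<close> \<open>0 < R\<close> by simp
    qed
    then show ?case using \<open>ball 0 r \<subseteq> U\<close> by auto
  qed
qed

lemma eventually_inner_tpow_le:
  assumes "trace_op E < 1" "bounded K" "bounded S" "0 < \<epsilon>"
  shows "\<forall>\<^sub>F s in at_top. \<forall>y\<in>K. \<forall>\<eta>\<in>S.
    \<bar>inner y (E (tpow s E \<eta>))\<bar> \<le> \<epsilon> * s \<and>
    \<bar>inner y (E (E (tpow s E \<eta>))) - inner y (E (tpow s E \<eta>))\<bar> \<le> \<epsilon> * s"
proof -
  obtain Y where "0 < Y" and Y: "\<And>y. y \<in> K \<Longrightarrow> norm y \<le> Y" using assms(2) by (auto simp: bounded_pos)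
  obtain R where "0 < R" and R: "\<And>\<eta>. \<eta> \<in> S \<Longrightarrow> norm \<eta> \<le> R" using assms(3) by (auto simp: bounded_pos)
  obtain B where "0 < B" and B: "\<And>x. norm (E x) \<le> B * norm x"
    using bounded_linear.pos_bounded linear_E linear_conv_bounded_linear by (metis mult.commute)
  define c where "c = Y * (B * B + B) * R"
  have "0 < c" using \<open>0 < Y\<close> \<open>0 < B\<close> \<open>0 < R\<close> by (simp add: c_def add_pos_pos)
  then have "0 < \<epsilon> / c" using assms(4) by simp
  from eventually_norm_tpow_le_sublinear[OF assms(1) this] eventually_gt_at_top[of 0]
  show ?thesis
  proof eventually_elim
    case (elim s)
    show ?case
    proof (intro ballI)
      fix y \<eta> assume "y \<in> K" "\<eta> \<in> S"
      let ?X = "tpow s E \<eta>"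
      have X: "norm ?X \<le> \<epsilon> / c * s * R"
        using elim R[OF \<open>\<eta> \<in> S\<close>] \<open>0 < \<epsilon> / c\<close> by (smt (verit) mult_left_mono mult_pos_pos)
      have "norm (E (E ?X)) \<le> B * norm (E ?X)" by (rule B)
      also have "\<dots> \<le> B * (B * norm ?X)" using B \<open>0 < B\<close> by (intro mult_left_mono) auto
      finally have EEX: "norm (E (E ?X)) \<le> B * B * norm ?X" by (simp add: mult.assoc)
      have "\<bar>inner y (E ?X)\<bar> \<le> Y * (B * norm ?X)"
        using Cauchy_Schwarz_ineq2[of y "E ?X"] Y[OF \<open>y \<in> K\<close>] B[of ?X]
        by (meson mult_mono norm_ge_zero order_trans \<open>0 < Y\<close> less_imp_le)
      moreover have "\<bar>inner y (E (E ?X))\<bar> \<le> Y * (B * B * norm ?X)"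
        using Cauchy_Schwarz_ineq2[of y "E (E ?X)"] Y[OF \<open>y \<in> K\<close>] EEX
        by (meson mult_mono norm_ge_zero order_trans \<open>0 < Y\<close> less_imp_le)
      moreover have "0 \<le> Y * (B * B * norm ?X)" using \<open>0 < Y\<close> \<open>0 < B\<close> by simp
      moreover have "\<bar>inner y (E (E ?X)) - inner y (E ?X)\<bar> \<le> \<bar>inner y (E (E ?X))\<bar> + \<bar>inner y (E ?X)\<bar>"
        by (rule abs_triangle_ineq4)
      moreover have "Y * (B * B * norm ?X) + Y * (B * norm ?X) = c / R * norm ?X"
        using \<open>0 < R\<close> by (simp add: c_def field_simps)
      moreover have "c / R * norm ?X \<le> \<epsilon> * s"
        using X \<open>0 < c\<close> \<open>0 < R\<close> by (simp add: field_simps)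
      ultimately show "\<bar>inner y (E ?X)\<bar> \<le> \<epsilon> * s \<and> \<bar>inner y (E (E ?X)) - inner y (E ?X)\<bar> \<le> \<epsilon> * s"
        by linarith
    qed
  qed
qed

lemma exists_scale_near_0:
  assumes "open U" "0 \<in> U" "compact S" "strongly_subhomogeneous Qt E 2" "0 < \<epsilon>"
  shows "\<exists>\<delta>>0. \<forall>t \<eta>. 0 < t \<longrightarrow> t \<le> \<delta> \<longrightarrow> \<eta> \<in> S \<longrightarrow> tpow t E \<eta> \<in> U
    \<and> \<bar>deriv (\<lambda>s. Qt (tpow s E \<eta>)) t\<bar> \<le> \<epsilon> \<and> t * \<bar>deriv (deriv (\<lambda>s. Qt (tpow s E \<eta>))) t\<bar> \<le> \<epsilon>"
proof -
  have "\<forall>\<^sub>F t in at_right 0. (\<forall>\<eta>\<in>S. tpow t E \<eta> \<in> U) \<and> (\<forall>\<eta>\<in>S.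
      \<bar>deriv (\<lambda>s. Qt (tpow s E \<eta>)) t\<bar> \<le> \<epsilon> \<and> t * \<bar>deriv (deriv (\<lambda>s. Qt (tpow s E \<eta>))) t\<bar> \<le> \<epsilon>)"
    using eventually_tpow_in_open[OF assms(1,2) compact_imp_bounded[OF assms(3)]]
      eventually_strongly_subhomogeneous_2[OF assms(4,3,5)]
    by (rule eventually_conj)
  then obtain b where "0 < b" and b: "\<And>t. 0 < t \<Longrightarrow> t < b \<Longrightarrow> (\<forall>\<eta>\<in>S. tpow t E \<eta> \<in> U) \<and> (\<forall>\<eta>\<in>S.
      \<bar>deriv (\<lambda>s. Qt (tpow s E \<eta>)) t\<bar> \<le> \<epsilon> \<and> t * \<bar>deriv (deriv (\<lambda>s. Qt (tpow s E \<eta>))) t\<bar> \<le> \<epsilon>)"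
    unfolding eventually_at_right_field by blast
  show ?thesis
    using \<open>0 < b\<close> b by (intro exI[of _ "b / 2"]) auto
qed

lemma exists_scale_near_infinity:
  assumes "trace_op E < 1" "bounded K" "bounded S" "0 < \<epsilon>"
  shows "\<exists>\<theta>\<^sub>0\<ge>1. \<forall>s\<ge>\<theta>\<^sub>0 powr (1 / trace_op E). \<forall>y\<in>K. \<forall>\<eta>\<in>S.
    \<bar>inner y (E (tpow s E \<eta>))\<bar> \<le> \<epsilon> * s \<and>
    \<bar>inner y (E (E (tpow s E \<eta>))) - inner y (E (tpow s E \<eta>))\<bar> \<le> \<epsilon> * s"
proof -
  obtain s0 where s0: "\<And>s. s0 \<le> s \<Longrightarrow> \<forall>y\<in>K. \<forall>\<eta>\<in>S.
      \<bar>inner y (E (tpow s E \<eta>))\<bar> \<le> \<epsilon> * s \<and>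
      \<bar>inner y (E (E (tpow s E \<eta>))) - inner y (E (tpow s E \<eta>))\<bar> \<le> \<epsilon> * s"
    using eventually_inner_tpow_le[OF assms] unfolding eventually_at_top_linorder by blast
  have "1 \<le> max 1 s0 powr trace_op E" using trace_op_pos by (intro ge_one_powr_ge_zero) auto
  moreover have "(max 1 s0 powr trace_op E) powr (1 / trace_op E) = max 1 s0"
    using trace_op_pos by (simp add: powr_powr)
  ultimately show ?thesis using s0 by (intro exI[of _ "max 1 s0 powr trace_op E"]) auto
qed

end

section \<open>Derivatives after the substitution \<open>s = \<theta>^(1/\<mu>)\<close>\<close>

lemma mono_on_or_antimono_on_of_sign:
  fixes g :: "real \<Rightarrow> real"
  assumes "\<bar>\<sigma>\<bar> = 1" "mono_on I (\<lambda>x. \<sigma> * g x)"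
  shows "mono_on I g \<or> antimono_on I g"
proof (cases "\<sigma> = 1")
  case True
  then show ?thesis using assms(2) by simp
next
  case False
  then have "\<sigma> = -1" using assms(1) by (auto simp: abs_if split: if_splits)
  then have "antimono_on I g"
    using assms(2) by (auto simp: mono_on_def monotone_on_def)
  then show ?thesis ..
qed

text \<open>With \<open>\<Psi> s = s^(1-\<mu>) \<Phi>' s\<close> one has \<open>\<sigma> \<Psi>' s = s^(-\<mu>) ((1 - \<mu>) \<sigma> \<Phi>' s + \<sigma> s \<Phi>'' s)\<close>, and
  the first summand dominates as soon as \<open>\<Phi>'\<close> stays close to \<open>\<sigma>\<close>.\<close>

lemma mono_on_sign_powr_times:
  fixes \<Phi>' \<Phi>'' :: "real \<Rightarrow> real"
  assumes "0 < \<mu>" "\<mu> < 1" "\<bar>\<sigma>\<bar> = 1" "0 < a"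
    and \<Phi>': "\<And>s. a \<le> s \<Longrightarrow> s \<le> b \<Longrightarrow> (\<Phi>' has_real_derivative \<Phi>'' s) (at s)"
    and near_sign: "\<And>s. a \<le> s \<Longrightarrow> s \<le> b \<Longrightarrow> \<bar>\<Phi>' s - \<sigma>\<bar> \<le> (1 - \<mu>) / 4"
    and small: "\<And>s. a \<le> s \<Longrightarrow> s \<le> b \<Longrightarrow> \<bar>s * \<Phi>'' s\<bar> \<le> (1 - \<mu>) / 4"
  shows "mono_on {a..b} (\<lambda>s. \<sigma> * (s powr (1 - \<mu>) * \<Phi>' s))"
proof (rule mono_onI)
  fix r t assume "r \<in> {a..b}" "t \<in> {a..b}" "r \<le> t"
  show "\<sigma> * (r powr (1 - \<mu>) * \<Phi>' r) \<le> \<sigma> * (t powr (1 - \<mu>) * \<Phi>' t)"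
  proof (rule DERIV_nonneg_imp_nondecreasing[OF \<open>r \<le> t\<close>])
    fix s assume "r \<le> s" "s \<le> t"
    then have s: "a \<le> s" "s \<le> b" "0 < s" using \<open>r \<in> {a..b}\<close> \<open>t \<in> {a..b}\<close> \<open>0 < a\<close> by auto
    have "((\<lambda>s. s powr (1 - \<mu>)) has_real_derivative (1 - \<mu>) * s powr (1 - \<mu> - 1)) (at s)"
      using s by (intro has_real_derivative_powr) auto
    from DERIV_cmult[OF DERIV_mult[OF this \<Phi>'[OF s(1,2)]], of \<sigma>]
    have "((\<lambda>s. \<sigma> * (s powr (1 - \<mu>) * \<Phi>' s)) has_real_derivative
        \<sigma> * ((1 - \<mu>) * s powr (1 - \<mu> - 1) * \<Phi>' s + \<Phi>'' s * s powr (1 - \<mu>))) (at s)" .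
    moreover have "\<sigma> * ((1 - \<mu>) * s powr (1 - \<mu> - 1) * \<Phi>' s + \<Phi>'' s * s powr (1 - \<mu>)) =
        s powr (- \<mu>) * ((1 - \<mu>) * (\<sigma> * \<Phi>' s) + \<sigma> * (s * \<Phi>'' s))"
      using s powr_add[of s "- \<mu>" 1] by (simp add: algebra_simps)
    moreover have "0 \<le> (1 - \<mu>) * (\<sigma> * \<Phi>' s) + \<sigma> * (s * \<Phi>'' s)"
    proof -
      have "\<sigma> * \<sigma> = 1" using abs_mult_self_eq[of \<sigma>] \<open>\<bar>\<sigma>\<bar> = 1\<close> by simp
      then have "\<sigma> * \<Phi>' s = 1 + \<sigma> * (\<Phi>' s - \<sigma>)" by (simp add: algebra_simps)
      moreover have "\<bar>\<sigma> * (\<Phi>' s - \<sigma>)\<bar> \<le> (1 - \<mu>) / 4" "\<bar>\<sigma> * (s * \<Phi>'' s)\<bar> \<le> (1 - \<mu>) / 4"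
        using near_sign[OF s(1,2)] small[OF s(1,2)] \<open>\<bar>\<sigma>\<bar> = 1\<close> by (simp_all add: abs_mult)
      ultimately have "(1 - \<mu>) * (3 / 4) \<le> (1 - \<mu>) * (\<sigma> * \<Phi>' s)"
        using \<open>\<mu> < 1\<close> \<open>0 < \<mu>\<close> by (intro mult_left_mono) (auto simp: abs_le_iff)
      then show ?thesis
        using \<open>\<bar>\<sigma> * (s * \<Phi>'' s)\<bar> \<le> (1 - \<mu>) / 4\<close> by (simp add: abs_le_iff)
    qed
    ultimately show "\<exists>y. ((\<lambda>s. \<sigma> * (s powr (1 - \<mu>) * \<Phi>' s)) has_real_derivative y) (at s) \<and> 0 \<le> y"
      by auto
  qed
qed

lemma has_real_derivative_powr_reparam:
  fixes f \<Phi> :: "real \<Rightarrow> real"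
  assumes "0 < \<mu>" "0 < \<theta>" and f: "\<And>\<theta>. 0 < \<theta> \<Longrightarrow> f \<theta> = \<Phi> (\<theta> powr (1 / \<mu>))"
    and "(\<Phi> has_real_derivative D) (at (\<theta> powr (1 / \<mu>)))"
  shows "(f has_real_derivative (1 / \<mu>) * (\<theta> powr (1 / \<mu>)) powr (1 - \<mu>) * D) (at \<theta>)"
proof -
  have "((\<lambda>\<theta>. \<theta> powr (1 / \<mu>)) has_real_derivative (1 / \<mu>) * \<theta> powr (1 / \<mu> - 1)) (at \<theta>)"
    using \<open>0 < \<theta>\<close> by (rule has_real_derivative_powr)
  from DERIV_chain2[OF assms(4) this]
  have "((\<lambda>\<theta>. \<Phi> (\<theta> powr (1 / \<mu>))) has_real_derivative D * ((1 / \<mu>) * \<theta> powr (1 / \<mu> - 1))) (at \<theta>)" .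
  moreover have "\<theta> powr (1 / \<mu> - 1) = (\<theta> powr (1 / \<mu>)) powr (1 - \<mu>)"
    using \<open>0 < \<mu>\<close> by (simp add: powr_powr field_simps)
  ultimately have "((\<lambda>\<theta>. \<Phi> (\<theta> powr (1 / \<mu>))) has_real_derivative
      (1 / \<mu>) * (\<theta> powr (1 / \<mu>)) powr (1 - \<mu>) * D) (at \<theta>)"
    by (simp only: mult_ac)
  then show ?thesis
    by (rule has_field_derivative_transform_within_open[where S = "{0<..}"]) (use \<open>0 < \<theta>\<close> f in auto)
qed

lemma powr_reparam_derivative_estimates:
  fixes f \<Phi> \<Phi>' \<Phi>'' :: "real \<Rightarrow> real"
  assumes "0 < \<mu>" "\<mu> < 1" "\<bar>\<sigma>\<bar> = 1" "0 < \<theta>\<^sub>0"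
    and f: "\<And>\<theta>. 0 < \<theta> \<Longrightarrow> f \<theta> = \<Phi> (\<theta> powr (1 / \<mu>))"
    and \<Phi>: "\<And>s. \<theta>\<^sub>0 powr (1 / \<mu>) \<le> s \<Longrightarrow> s \<le> \<theta>\<^sub>1 powr (1 / \<mu>) \<Longrightarrow>
      (\<Phi> has_real_derivative \<Phi>' s) (at s) \<and> (\<Phi>' has_real_derivative \<Phi>'' s) (at s)
      \<and> \<bar>\<Phi>' s - \<sigma>\<bar> \<le> (1 - \<mu>) / 4 \<and> \<bar>s * \<Phi>'' s\<bar> \<le> (1 - \<mu>) / 4"
  shows "\<forall>\<theta>\<in>{\<theta>\<^sub>0..\<theta>\<^sub>1}. f differentiable (at \<theta>)"
    and "mono_on {\<theta>\<^sub>0..\<theta>\<^sub>1} (deriv f) \<or> antimono_on {\<theta>\<^sub>0..\<theta>\<^sub>1} (deriv f)"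
    and "\<forall>\<theta>\<in>{\<theta>\<^sub>0..\<theta>\<^sub>1}. 1 / (2 * \<mu>) * \<theta> powr (1 / \<mu> - 1) \<le> \<bar>deriv f \<theta>\<bar>"
proof -
  let ?I = "{\<theta>\<^sub>0..\<theta>\<^sub>1}" and ?s = "\<lambda>\<theta>. \<theta> powr (1 / \<mu>)"
  have s_mono: "?s \<theta> \<le> ?s \<theta>'" if "\<theta> \<in> ?I" "\<theta> \<le> \<theta>'" for \<theta> \<theta>'
    using that \<open>0 < \<theta>\<^sub>0\<close> \<open>0 < \<mu>\<close> by (intro powr_mono2) auto
  have s_range: "?s \<theta>\<^sub>0 \<le> ?s \<theta> \<and> ?s \<theta> \<le> ?s \<theta>\<^sub>1" if "\<theta> \<in> ?I" for \<theta>
    using s_mono that by auto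
  have f': "(f has_real_derivative (1 / \<mu>) * (?s \<theta> powr (1 - \<mu>) * \<Phi>' (?s \<theta>))) (at \<theta>)"
    if "\<theta> \<in> ?I" for \<theta>
    using has_real_derivative_powr_reparam[OF \<open>0 < \<mu>\<close> _ f \<Phi>[THEN conjunct1]] s_range[OF that] that
      \<open>0 < \<theta>\<^sub>0\<close>
    by (simp add: mult_ac)
  then show "\<forall>\<theta>\<in>?I. f differentiable (at \<theta>)"
    using real_differentiable_def by blast
  have deriv_f: "deriv f \<theta> = (1 / \<mu>) * (?s \<theta> powr (1 - \<mu>) * \<Phi>' (?s \<theta>))" if "\<theta> \<in> ?I" for \<theta>
    using f'[OF that] by (rule DERIV_imp_deriv)
  have "mono_on {?s \<theta>\<^sub>0..?s \<theta>\<^sub>1} (\<lambda>s. \<sigma> * (s powr (1 - \<mu>) * \<Phi>' s))"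
    using assms(1-4) \<Phi> by (intro mono_on_sign_powr_times) auto
  then have "mono_on ?I (\<lambda>\<theta>. \<sigma> * deriv f \<theta>)"
  proof (intro mono_onI)
    fix r t assume "r \<in> ?I" "t \<in> ?I" "r \<le> t"
    then have "\<sigma> * (?s r powr (1 - \<mu>) * \<Phi>' (?s r)) \<le> \<sigma> * (?s t powr (1 - \<mu>) * \<Phi>' (?s t))"
      using s_range s_mono by (intro mono_onD[OF \<open>mono_on _ _\<close>]) auto
    then have "(1 / \<mu>) * (\<sigma> * (?s r powr (1 - \<mu>) * \<Phi>' (?s r))) \<le>
        (1 / \<mu>) * (\<sigma> * (?s t powr (1 - \<mu>) * \<Phi>' (?s t)))"
      by (rule mult_left_mono) (use \<open>0 < \<mu>\<close> in simp)
    then show "\<sigma> * deriv f r \<le> \<sigma> * deriv f t"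
      using \<open>r \<in> ?I\<close> \<open>t \<in> ?I\<close> by (simp only: deriv_f mult_ac)
  qed
  then show "mono_on ?I (deriv f) \<or> antimono_on ?I (deriv f)"
    by (rule mono_on_or_antimono_on_of_sign[OF \<open>\<bar>\<sigma>\<bar> = 1\<close>])
  show "\<forall>\<theta>\<in>?I. 1 / (2 * \<mu>) * \<theta> powr (1 / \<mu> - 1) \<le> \<bar>deriv f \<theta>\<bar>"
  proof
    fix \<theta> assume "\<theta> \<in> ?I"
    have "\<bar>\<Phi>' (?s \<theta>) - \<sigma>\<bar> \<le> (1 - \<mu>) / 4"
      using \<Phi> s_range[OF \<open>\<theta> \<in> ?I\<close>] by blast
    then have "1 / 2 \<le> \<bar>\<Phi>' (?s \<theta>)\<bar>"
      using \<open>\<bar>\<sigma>\<bar> = 1\<close> \<open>0 < \<mu>\<close> by (simp add: abs_if split: if_splits)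
    have "1 / (2 * \<mu>) * \<theta> powr (1 / \<mu> - 1) = (1 / \<mu>) * (?s \<theta> powr (1 - \<mu>) * (1 / 2))"
      using \<open>0 < \<mu>\<close> by (simp add: powr_powr field_simps)
    also have "\<dots> \<le> (1 / \<mu>) * (?s \<theta> powr (1 - \<mu>) * \<bar>\<Phi>' (?s \<theta>)\<bar>)"
      using \<open>1 / 2 \<le> \<bar>\<Phi>' (?s \<theta>)\<bar>\<close> \<open>0 < \<mu>\<close> by (intro mult_left_mono) auto
    also have "\<dots> = \<bar>deriv f \<theta>\<bar>"
      using \<open>0 < \<mu>\<close> by (simp add: deriv_f[OF \<open>\<theta> \<in> ?I\<close>] abs_mult)
    finally show "1 / (2 * \<mu>) * \<theta> powr (1 / \<mu> - 1) \<le> \<bar>deriv f \<theta>\<bar>" .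
  qed
qed

section \<open>The phase function\<close>

lemma C2_on_comp_curve:
  fixes f :: "'a::euclidean_space \<Rightarrow> real" and c c' :: "real \<Rightarrow> 'a"
  assumes "C2_on U f" "open V" "t \<in> V"
    and c_U: "\<And>s. s \<in> V \<Longrightarrow> c s \<in> U"
    and c: "\<And>s. s \<in> V \<Longrightarrow> (c has_vector_derivative c' s) (at s)"
    and c': "\<And>s. s \<in> V \<Longrightarrow> c' differentiable (at s)"
  shows "(\<lambda>s. f (c s)) differentiable (at t)" and "deriv (\<lambda>s. f (c s)) differentiable (at t)"
proof -
  obtain f' :: "'a \<Rightarrow> 'a \<Rightarrow>\<^sub>L real" and f'' :: "'a \<Rightarrow> 'a \<Rightarrow>\<^sub>L 'a \<Rightarrow>\<^sub>L real"
    where f': "\<And>x. x \<in> U \<Longrightarrow> (f has_derivative blinfun_apply (f' x)) (at x)"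
      and f'': "\<And>x. x \<in> U \<Longrightarrow> (f' has_derivative blinfun_apply (f'' x)) (at x)"
    using \<open>C2_on U f\<close> unfolding C2_on_def by blast
  have c_deriv: "(c has_derivative (\<lambda>h. h *\<^sub>R c' s)) (at s)" if "s \<in> V" for s
    using c[OF that] by (simp add: has_vector_derivative_def)
  have fc: "((\<lambda>s. f (c s)) has_real_derivative f' (c s) (c' s)) (at s)" if "s \<in> V" for s
  proof -
    have "((\<lambda>s. f (c s)) has_derivative (\<lambda>h. f' (c s) (h *\<^sub>R c' s))) (at s)"
      using diff_chain_at[OF c_deriv[OF that] f'[OF c_U[OF that]]] by (simp add: o_def)
    then show ?thesis
      unfolding has_field_derivative_def
      by (rule has_derivative_eq_rhs) (auto simp: fun_eq_iff blinfun.scaleR_right mult.commute)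
  qed
  then show "(\<lambda>s. f (c s)) differentiable (at t)"
    using \<open>t \<in> V\<close> real_differentiable_def by blast
  have "(\<lambda>s. f' (c s) (c' s)) differentiable (at t)"
  proof -
    have "((\<lambda>s. f' (c s)) has_derivative (\<lambda>h. f'' (c t) (h *\<^sub>R c' t))) (at t)"
      using diff_chain_at[OF c_deriv[OF \<open>t \<in> V\<close>] f''[OF c_U[OF \<open>t \<in> V\<close>]]] by (simp add: o_def)
    moreover obtain c'' where "(c' has_derivative c'') (at t)"
      using c'[OF \<open>t \<in> V\<close>] unfolding differentiable_def by blast
    ultimately show ?thesis
      using bounded_bilinear.FDERIV[OF bounded_bilinear_blinfun_apply] unfolding differentiable_def by blast
  qed
  moreover have "f' (c s) (c' s) = deriv (\<lambda>s. f (c s)) s" if "s \<in> V" for s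
    using DERIV_imp_deriv[OF fc[OF that]] by simp
  ultimately show "deriv (\<lambda>s. f (c s)) differentiable (at t)"
    unfolding differentiable_def using has_derivative_transform_within_open[OF _ \<open>open V\<close> \<open>t \<in> V\<close>]
    by blast
qed

lemma C2_on_comp_tpow:
  fixes f :: "'a::euclidean_space \<Rightarrow> real"
  assumes "C2_on U f" "linear E" "0 < t" "tpow t E \<eta> \<in> U"
  shows "(\<lambda>s. f (tpow s E \<eta>)) differentiable (at t)"
    and "deriv (\<lambda>s. f (tpow s E \<eta>)) differentiable (at t)"
proof -
  let ?V = "{s \<in> {0<..}. tpow s E \<eta> \<in> U}"
  have "open U" using \<open>C2_on U f\<close> by (simp add: C2_on_def)
  then have "open ((\<lambda>s. tpow s E \<eta>) -` U \<inter> {0<..})"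
    using continuous_on_open_vimage[of "{0<..}" "\<lambda>s. tpow s E \<eta>"] continuous_on_tpow[OF \<open>linear E\<close>]
    by simp
  moreover have "(\<lambda>s. tpow s E \<eta>) -` U \<inter> {0<..} = ?V" by auto
  ultimately have "open ?V" by simp
  moreover have "(\<lambda>s. (1 / s) *\<^sub>R E (tpow s E \<eta>)) differentiable (at s)" if "0 < s" for s
  proof (rule differentiable_scaleR)
    show "(\<lambda>s. 1 / s) differentiable (at s)" using that by (auto intro!: derivative_intros)
    have "bounded_linear E" using \<open>linear E\<close> by (simp add: linear_conv_bounded_linear)
    from bounded_linear.has_vector_derivative[OF this has_vector_derivative_tpow[OF \<open>linear E\<close> that]]
    show "(\<lambda>s. E (tpow s E \<eta>)) differentiable (at s)" by (rule differentiableI_vector)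
  qed
  ultimately show "(\<lambda>s. f (tpow s E \<eta>)) differentiable (at t)"
    and "deriv (\<lambda>s. f (tpow s E \<eta>)) differentiable (at t)"
    using assms has_vector_derivative_tpow[OF \<open>linear E\<close>]
    by (auto intro!: C2_on_comp_curve[of U f ?V])
qed

lemma has_real_derivative_linear_tpow:
  fixes L :: "'a::euclidean_space \<Rightarrow> real"
  assumes "bounded_linear L" "linear E" "0 < s"
  shows "((\<lambda>s. L (tpow s E \<eta>)) has_real_derivative L (E (tpow s E \<eta>)) / s) (at s)"
  using bounded_linear.has_vector_derivative[OF assms(1) has_vector_derivative_tpow[OF assms(2,3)]]
  by (simp add: has_real_derivative_iff_has_vector_derivative linear_cmul[OF bounded_linear.linear[OF assms(1)]]
      divide_inverse mult.commute)

text \<open>\<open>\<lambda>s. \<sigma> * s + n * g (s / n) + inner y (tpow s E \<eta>)\<close> is the phase as a function of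
  \<open>s = \<theta> powr (1 / \<mu>)\<close>, with \<open>g t = Qt (tpow t E \<eta>)\<close> (see \<open>phase_eq_profile\<close>).\<close>

lemma has_real_derivative_profile:
  fixes g :: "real \<Rightarrow> real" and E :: "'a::euclidean_space \<Rightarrow> 'a"
  assumes "linear E" "0 < n" "0 < s"
    and g: "g differentiable (at (s / n))" and g': "deriv g differentiable (at (s / n))"
  shows "((\<lambda>s. \<sigma> * s + n * g (s / n) + inner y (tpow s E \<eta>)) has_real_derivative
      \<sigma> + deriv g (s / n) + inner y (E (tpow s E \<eta>)) / s) (at s)"
    and "((\<lambda>s. \<sigma> + deriv g (s / n) + inner y (E (tpow s E \<eta>)) / s) has_real_derivative
      deriv (deriv g) (s / n) / n + (inner y (E (E (tpow s E \<eta>))) - inner y (E (tpow s E \<eta>))) / s\<^sup>2) (at s)"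
proof -
  have scale: "((\<lambda>s. s / n) has_real_derivative 1 / n) (at s)"
    using \<open>0 < n\<close> by (auto intro!: derivative_eq_intros)
  have inner_y: "bounded_linear (\<lambda>x. inner y x)" "bounded_linear (\<lambda>x. inner y (E x))"
    using \<open>linear E\<close> by (auto intro: bounded_linear_compose[OF bounded_linear_inner_right]
        simp: linear_conv_bounded_linear)
  have "((\<lambda>s. g (s / n)) has_real_derivative deriv g (s / n) * (1 / n)) (at s)"
    using DERIV_chain2[OF g[unfolded DERIV_deriv_iff_real_differentiable[symmetric]] scale] .
  from DERIV_add[OF DERIV_add[OF DERIV_cmult[OF DERIV_ident, of \<sigma>] DERIV_cmult[OF this, of n]]
      has_real_derivative_linear_tpow[OF inner_y(1) \<open>linear E\<close> \<open>0 < s\<close>]]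
  show "((\<lambda>s. \<sigma> * s + n * g (s / n) + inner y (tpow s E \<eta>)) has_real_derivative
      \<sigma> + deriv g (s / n) + inner y (E (tpow s E \<eta>)) / s) (at s)"
    using \<open>0 < n\<close> by simp
  have "((\<lambda>s. deriv g (s / n)) has_real_derivative deriv (deriv g) (s / n) * (1 / n)) (at s)"
    using DERIV_chain2[OF g'[unfolded DERIV_deriv_iff_real_differentiable[symmetric]] scale] .
  moreover have "((\<lambda>s. inner y (E (tpow s E \<eta>)) / s) has_real_derivative
      (inner y (E (E (tpow s E \<eta>))) / s * s - inner y (E (tpow s E \<eta>)) * 1) / (s * s)) (at s)"
    using has_real_derivative_linear_tpow[OF inner_y(2) \<open>linear E\<close> \<open>0 < s\<close>] \<open>0 < s\<close>
    by (intro DERIV_divide DERIV_ident) auto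
  ultimately have "((\<lambda>s. \<sigma> + deriv g (s / n) + inner y (E (tpow s E \<eta>)) / s) has_real_derivative
      0 + deriv (deriv g) (s / n) * (1 / n) +
      (inner y (E (E (tpow s E \<eta>))) / s * s - inner y (E (tpow s E \<eta>)) * 1) / (s * s)) (at s)"
    by (intro DERIV_add DERIV_const)
  then show "((\<lambda>s. \<sigma> + deriv g (s / n) + inner y (E (tpow s E \<eta>)) / s) has_real_derivative
      deriv (deriv g) (s / n) / n + (inner y (E (E (tpow s E \<eta>))) - inner y (E (tpow s E \<eta>))) / s\<^sup>2) (at s)"
    using \<open>0 < s\<close> by (simp add: power2_eq_square)
qed

lemma profile_estimates:
  fixes g :: "real \<Rightarrow> real" and E :: "'a::euclidean_space \<Rightarrow> 'a" and y \<eta> :: 'a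
    and \<sigma> n s \<epsilon> :: real
  defines "\<Phi>' \<equiv> \<lambda>s. \<sigma> + deriv g (s / n) + inner y (E (tpow s E \<eta>)) / s"
    and "\<Phi>'' \<equiv> \<lambda>s. deriv (deriv g) (s / n) / n
      + (inner y (E (E (tpow s E \<eta>))) - inner y (E (tpow s E \<eta>))) / s\<^sup>2"
  assumes "linear E" "0 < n" "0 < s"
    and "g differentiable (at (s / n))" "deriv g differentiable (at (s / n))"
    and g_bounds: "\<bar>deriv g (s / n)\<bar> \<le> \<epsilon>" "s / n * \<bar>deriv (deriv g) (s / n)\<bar> \<le> \<epsilon>"
    and inner_bounds: "\<bar>inner y (E (tpow s E \<eta>))\<bar> \<le> \<epsilon> * s"
      "\<bar>inner y (E (E (tpow s E \<eta>))) - inner y (E (tpow s E \<eta>))\<bar> \<le> \<epsilon> * s"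
  shows "((\<lambda>s. \<sigma> * s + n * g (s / n) + inner y (tpow s E \<eta>)) has_real_derivative \<Phi>' s) (at s)"
    and "(\<Phi>' has_real_derivative \<Phi>'' s) (at s)"
    and "\<bar>\<Phi>' s - \<sigma>\<bar> \<le> 2 * \<epsilon>"
    and "\<bar>s * \<Phi>'' s\<bar> \<le> 2 * \<epsilon>"
proof -
  show "((\<lambda>s. \<sigma> * s + n * g (s / n) + inner y (tpow s E \<eta>)) has_real_derivative \<Phi>' s) (at s)"
    and "(\<Phi>' has_real_derivative \<Phi>'' s) (at s)"
    unfolding \<Phi>'_def \<Phi>''_def using assms(3-7) by (rule has_real_derivative_profile)+
  have "\<bar>\<Phi>' s - \<sigma>\<bar> \<le> \<bar>deriv g (s / n)\<bar> + \<bar>inner y (E (tpow s E \<eta>))\<bar> / s"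
    using abs_triangle_ineq[of "deriv g (s / n)" "inner y (E (tpow s E \<eta>)) / s"] \<open>0 < s\<close>
    by (simp add: \<Phi>'_def abs_divide)
  also have "\<dots> \<le> \<epsilon> + \<epsilon>"
    using g_bounds inner_bounds \<open>0 < s\<close> by (intro add_mono) (auto simp: divide_le_eq mult.commute)
  finally show "\<bar>\<Phi>' s - \<sigma>\<bar> \<le> 2 * \<epsilon>" by simp
  have "s * \<Phi>'' s = s / n * deriv (deriv g) (s / n)
      + (inner y (E (E (tpow s E \<eta>))) - inner y (E (tpow s E \<eta>))) / s"
    using \<open>0 < s\<close> by (simp add: \<Phi>''_def power2_eq_square field_simps)
  then have "\<bar>s * \<Phi>'' s\<bar> \<le> s / n * \<bar>deriv (deriv g) (s / n)\<bar>
      + \<bar>inner y (E (E (tpow s E \<eta>))) - inner y (E (tpow s E \<eta>))\<bar> / s"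
    using abs_triangle_ineq[of "s / n * deriv (deriv g) (s / n)"
        "(inner y (E (E (tpow s E \<eta>))) - inner y (E (tpow s E \<eta>))) / s"] \<open>0 < s\<close> \<open>0 < n\<close>
    by (simp add: abs_mult abs_divide)
  also have "\<dots> \<le> \<epsilon> + \<epsilon>"
    using g_bounds inner_bounds \<open>0 < s\<close> by (intro add_mono) (auto simp: divide_le_eq mult.commute)
  finally show "\<bar>s * \<Phi>'' s\<bar> \<le> 2 * \<epsilon>" by simp
qed

definition phase ::
  "('a::euclidean_space \<Rightarrow> real) \<Rightarrow> ('a \<Rightarrow> real) \<Rightarrow> ('a \<Rightarrow> 'a) \<Rightarrow> real \<Rightarrow> real \<Rightarrow> 'a \<Rightarrow> 'a \<Rightarrow> real \<Rightarrow> real"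
  where "phase Q Qt E \<mu> n y \<eta> \<theta> =
    Q (tpow \<theta> (\<lambda>x. (1 / \<mu>) *\<^sub>R E x) \<eta>)
    + n * Qt (tpow n (\<lambda>x. - E x) (tpow \<theta> (\<lambda>x. (1 / \<mu>) *\<^sub>R E x) \<eta>))
    + inner y (tpow \<theta> (\<lambda>x. (1 / \<mu>) *\<^sub>R E x) \<eta>)"

lemma tpow_neg_tpow_scaleR:
  fixes E :: "'a::euclidean_space \<Rightarrow> 'a"
  assumes "linear E" "0 < n" "0 < \<theta>"
  shows "tpow n (\<lambda>x. - E x) (tpow \<theta> (\<lambda>x. c *\<^sub>R E x) \<eta>) = tpow (\<theta> powr c / n) E \<eta>"
proof -
  have "tpow n (\<lambda>x. - E x) z = tpow (n powr -1) E z" for z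
    using tpow_scaleR_operator[OF assms(1,2), of "-1"] by simp
  then show ?thesis
    using assms by (simp add: tpow_scaleR_operator tpow_tpow powr_neg_one divide_inverse mult.commute)
qed

lemma phase_eq_profile:
  fixes E :: "'a::euclidean_space \<Rightarrow> 'a"
  assumes "linear E" "homogeneous_wrt Q E" "0 < n" "0 < \<theta>"
  shows "phase Q Qt E \<mu> n y \<eta> \<theta> = Q \<eta> * \<theta> powr (1 / \<mu>) + n * Qt (tpow (\<theta> powr (1 / \<mu>) / n) E \<eta>)
    + inner y (tpow (\<theta> powr (1 / \<mu>)) E \<eta>)"
  using assms unfolding phase_def tpow_neg_tpow_scaleR[OF assms(1,3,4)]
  by (simp add: tpow_scaleR_operator homogeneous_wrt_def mult.commute)

lemma phase_derivative_estimates: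
  fixes Q Qt :: "'a::euclidean_space \<Rightarrow> real" and E :: "'a \<Rightarrow> 'a" and \<eta> y :: 'a and \<mu> :: real
  defines "g \<equiv> \<lambda>t. Qt (tpow t E \<eta>)" and "\<epsilon> \<equiv> (1 - \<mu>) / 8"
  assumes "linear E" "homogeneous_wrt Q E" "C2_on U Qt"
    and "0 < \<mu>" "\<mu> < 1" "\<bar>Q \<eta>\<bar> = 1" "1 \<le> n" "0 < \<delta>" "0 < \<theta>\<^sub>0"
    and near_0: "\<And>t. 0 < t \<Longrightarrow> t \<le> \<delta> \<Longrightarrow>
      tpow t E \<eta> \<in> U \<and> \<bar>deriv g t\<bar> \<le> \<epsilon> \<and> t * \<bar>deriv (deriv g) t\<bar> \<le> \<epsilon>"
    and near_infinity: "\<And>s. \<theta>\<^sub>0 powr (1 / \<mu>) \<le> s \<Longrightarrow>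
      \<bar>inner y (E (tpow s E \<eta>))\<bar> \<le> \<epsilon> * s \<and>
      \<bar>inner y (E (E (tpow s E \<eta>))) - inner y (E (tpow s E \<eta>))\<bar> \<le> \<epsilon> * s"
  shows "\<forall>\<theta>\<in>{\<theta>\<^sub>0..(n * \<delta>) powr \<mu>}. tpow n (\<lambda>x. - E x) (tpow \<theta> (\<lambda>x. (1 / \<mu>) *\<^sub>R E x) \<eta>) \<in> U
      \<and> phase Q Qt E \<mu> n y \<eta> differentiable (at \<theta>)"
    and "mono_on {\<theta>\<^sub>0..(n * \<delta>) powr \<mu>} (deriv (phase Q Qt E \<mu> n y \<eta>))
      \<or> antimono_on {\<theta>\<^sub>0..(n * \<delta>) powr \<mu>} (deriv (phase Q Qt E \<mu> n y \<eta>))"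
    and "\<forall>\<theta>\<in>{\<theta>\<^sub>0..(n * \<delta>) powr \<mu>}.
      1 / (2 * \<mu>) * \<theta> powr (1 / \<mu> - 1) \<le> \<bar>deriv (phase Q Qt E \<mu> n y \<eta>) \<theta>\<bar>"
proof -
  let ?a = "\<theta>\<^sub>0 powr (1 / \<mu>)" and ?b = "((n * \<delta>) powr \<mu>) powr (1 / \<mu>)"
  have range: "0 < s \<and> 0 < s / n \<and> s / n \<le> \<delta>" if "?a \<le> s" "s \<le> ?b" for s
  proof -
    have "0 < s" using that(1) \<open>0 < \<theta>\<^sub>0\<close> by (smt (verit) powr_gt_zero)
    moreover have "?b = n * \<delta>" using \<open>0 < \<mu>\<close> \<open>1 \<le> n\<close> \<open>0 < \<delta>\<close> by (simp add: powr_powr)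
    ultimately show ?thesis using that(2) \<open>1 \<le> n\<close> by (simp add: field_simps)
  qed
  define \<Phi>' where "\<Phi>' s = Q \<eta> + deriv g (s / n) + inner y (E (tpow s E \<eta>)) / s" for s
  define \<Phi>'' where "\<Phi>'' s = deriv (deriv g) (s / n) / n
    + (inner y (E (E (tpow s E \<eta>))) - inner y (E (tpow s E \<eta>))) / s\<^sup>2" for s
  have profile_facts: "((\<lambda>s. Q \<eta> * s + n * g (s / n) + inner y (tpow s E \<eta>)) has_real_derivative \<Phi>' s) (at s)
      \<and> (\<Phi>' has_real_derivative \<Phi>'' s) (at s) \<and> \<bar>\<Phi>' s - Q \<eta>\<bar> \<le> (1 - \<mu>) / 4 \<and> \<bar>s * \<Phi>'' s\<bar> \<le> (1 - \<mu>) / 4"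
    if "?a \<le> s" "s \<le> ?b" for s
  proof -
    have s: "0 < s" "0 < s / n" "s / n \<le> \<delta>" using range[OF that] by auto
    have "tpow (s / n) E \<eta> \<in> U" using near_0[OF s(2,3)] by blast
    note g_smooth = C2_on_comp_tpow[OF \<open>C2_on U Qt\<close> \<open>linear E\<close> s(2) this, folded g_def]
    have "0 < n" using \<open>1 \<le> n\<close> by simp
    have bounds: "\<bar>deriv g (s / n)\<bar> \<le> \<epsilon>" "s / n * \<bar>deriv (deriv g) (s / n)\<bar> \<le> \<epsilon>"
      "\<bar>inner y (E (tpow s E \<eta>))\<bar> \<le> \<epsilon> * s"
      "\<bar>inner y (E (E (tpow s E \<eta>))) - inner y (E (tpow s E \<eta>))\<bar> \<le> \<epsilon> * s"
      using near_0[OF s(2,3)] near_infinity[OF that(1)] by auto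
    note profile = profile_estimates[OF \<open>linear E\<close> \<open>0 < n\<close> s(1) g_smooth bounds]
    show ?thesis
      unfolding \<Phi>'_def[abs_def] \<Phi>''_def[abs_def]
      using profile(1-3)[where \<sigma> = "Q \<eta>"] profile(4) by (auto simp: \<epsilon>_def)
  qed
  have "phase Q Qt E \<mu> n y \<eta> \<theta> = Q \<eta> * \<theta> powr (1 / \<mu>) + n * g (\<theta> powr (1 / \<mu>) / n)
      + inner y (tpow (\<theta> powr (1 / \<mu>)) E \<eta>)" if "0 < \<theta>" for \<theta>
    using phase_eq_profile[OF \<open>linear E\<close> \<open>homogeneous_wrt Q E\<close> _ that] \<open>1 \<le> n\<close> by (simp add: g_def)
  note estimates = powr_reparam_derivative_estimates[where \<theta>\<^sub>1 = "(n * \<delta>) powr \<mu>"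
      and \<Phi> = "\<lambda>s. Q \<eta> * s + n * g (s / n) + inner y (tpow s E \<eta>)",
      OF \<open>0 < \<mu>\<close> \<open>\<mu> < 1\<close> \<open>\<bar>Q \<eta>\<bar> = 1\<close> \<open>0 < \<theta>\<^sub>0\<close> this profile_facts]
  have "tpow n (\<lambda>x. - E x) (tpow \<theta> (\<lambda>x. (1 / \<mu>) *\<^sub>R E x) \<eta>) \<in> U" if "\<theta> \<in> {\<theta>\<^sub>0..(n * \<delta>) powr \<mu>}" for \<theta>
  proof -
    have "?a \<le> \<theta> powr (1 / \<mu>)" "\<theta> powr (1 / \<mu>) \<le> ?b"
      using that \<open>0 < \<theta>\<^sub>0\<close> \<open>0 < \<mu>\<close> by (auto intro: powr_mono2)
    then show ?thesis
      using range near_0 tpow_neg_tpow_scaleR[OF \<open>linear E\<close>] that \<open>0 < \<theta>\<^sub>0\<close> \<open>1 \<le> n\<close> by auto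
  qed
  with estimates show "\<forall>\<theta>\<in>{\<theta>\<^sub>0..(n * \<delta>) powr \<mu>}. tpow n (\<lambda>x. - E x) (tpow \<theta> (\<lambda>x. (1 / \<mu>) *\<^sub>R E x) \<eta>) \<in> U
      \<and> phase Q Qt E \<mu> n y \<eta> differentiable (at \<theta>)"
    by blast
  show "mono_on {\<theta>\<^sub>0..(n * \<delta>) powr \<mu>} (deriv (phase Q Qt E \<mu> n y \<eta>))
      \<or> antimono_on {\<theta>\<^sub>0..(n * \<delta>) powr \<mu>} (deriv (phase Q Qt E \<mu> n y \<eta>))"
    and "\<forall>\<theta>\<in>{\<theta>\<^sub>0..(n * \<delta>) powr \<mu>}.
      1 / (2 * \<mu>) * \<theta> powr (1 / \<mu> - 1) \<le> \<bar>deriv (phase Q Qt E \<mu> n y \<eta>) \<theta>\<bar>"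
    using estimates(2,3) by blast+
qed

lemma Exps_abs: "E \<in> Exps Q \<Longrightarrow> E \<in> Exps (\<lambda>\<xi>. \<bar>Q \<xi>\<bar>)"
  by (simp add: Exps_def homogeneous_wrt_def abs_mult)

theorem mainTheorem7:
  fixes Q Qt :: "'a::euclidean_space \<Rightarrow> real"
    and U :: "'a set" and E :: "'a \<Rightarrow> 'a" and \<mu> :: real
  assumes Q_cont: "continuous_on UNIV Q"
    and Q_pos: "positive_homogeneous (\<lambda>\<xi>. \<bar>Q \<xi>\<bar>)"
    and E_Exp: "E \<in> Exps Q"
    and mu_def: "\<mu> = trace_op E"
    and U_open: "open U" and U_0: "0 \<in> U"
    and Qt_C2: "C2_on U Qt"
    and mu_lt: "\<mu> < 1"
    and Qt_sub: "strongly_subhomogeneous Qt E 2"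
  shows "\<forall>K. compact K \<longrightarrow>
    (\<exists>\<delta>>0. \<exists>\<theta>\<^sub>0\<ge>1. \<forall>n::nat. n \<ge> 1 \<and> \<theta>\<^sub>0 \<le> (real n * \<delta>) powr \<mu> \<longrightarrow>
      (\<forall>y\<in>K. \<forall>\<eta>\<in>{\<eta>. \<bar>Q \<eta>\<bar> = 1}.
        (let f = (\<lambda>\<theta>. Q (tpow \<theta> (\<lambda>x. (1 / \<mu>) *\<^sub>R E x) \<eta>)
                   + real n * Qt (tpow (real n) (\<lambda>x. - E x) (tpow \<theta> (\<lambda>x. (1 / \<mu>) *\<^sub>R E x) \<eta>))
                   + inner y (tpow \<theta> (\<lambda>x. (1 / \<mu>) *\<^sub>R E x) \<eta>));
             I = {\<theta>\<^sub>0 .. (real n * \<delta>) powr \<mu>}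
         in (\<forall>\<theta>\<in>I. tpow (real n) (\<lambda>x. - E x) (tpow \<theta> (\<lambda>x. (1 / \<mu>) *\<^sub>R E x) \<eta>) \<in> U
                     \<and> f differentiable (at \<theta>))
          \<and> (mono_on I (deriv f) \<or> monotone_on I (\<le>) (\<ge>) (deriv f))
          \<and> (\<forall>\<theta>\<in>I. \<bar>deriv f \<theta>\<bar> \<ge> (1 / (2 * \<mu>)) * \<theta> powr (1 / \<mu> - 1)))))"
proof (intro allI impI, goal_cases)
  case (1 K)
  then have "bounded K" by (rule compact_imp_bounded)
  interpret homogeneous_gauge "\<lambda>\<xi>. \<bar>Q \<xi>\<bar>" E
    using Q_pos Exps_abs[OF E_Exp] by unfold_locales (auto simp: positive_homogeneous_def)
  let ?S = "{\<eta>. \<bar>Q \<eta>\<bar> = 1}" and ?\<epsilon> = "(1 - \<mu>) / 8"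
  have "compact ?S" using Q_pos by (simp add: positive_homogeneous_def)
  have "0 < \<mu>" "0 < ?\<epsilon>" using trace_op_pos mu_def mu_lt by simp_all
  have "linear E" "homogeneous_wrt Q E" using E_Exp by (simp_all add: Exps_def)
  obtain \<delta> where "0 < \<delta>" and near_0: "\<And>t \<eta>. 0 < t \<Longrightarrow> t \<le> \<delta> \<Longrightarrow> \<eta> \<in> ?S \<Longrightarrow> tpow t E \<eta> \<in> U
      \<and> \<bar>deriv (\<lambda>s. Qt (tpow s E \<eta>)) t\<bar> \<le> ?\<epsilon> \<and> t * \<bar>deriv (deriv (\<lambda>s. Qt (tpow s E \<eta>))) t\<bar> \<le> ?\<epsilon>"
    using exists_scale_near_0[OF U_open U_0 \<open>compact ?S\<close> Qt_sub \<open>0 < ?\<epsilon>\<close>] by blast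
  obtain \<theta>\<^sub>0 where "1 \<le> \<theta>\<^sub>0" and near_infinity: "\<And>s y \<eta>. \<theta>\<^sub>0 powr (1 / \<mu>) \<le> s \<Longrightarrow> y \<in> K \<Longrightarrow> \<eta> \<in> ?S \<Longrightarrow>
      \<bar>inner y (E (tpow s E \<eta>))\<bar> \<le> ?\<epsilon> * s \<and>
      \<bar>inner y (E (E (tpow s E \<eta>))) - inner y (E (tpow s E \<eta>))\<bar> \<le> ?\<epsilon> * s"
    using exists_scale_near_infinity[OF _ \<open>bounded K\<close> compact_imp_bounded[OF \<open>compact ?S\<close>] \<open>0 < ?\<epsilon>\<close>]
      mu_def mu_lt by blast
  show ?case
  proof (rule exI[of _ \<delta>], rule conjI[OF \<open>0 < \<delta>\<close>], rule exI[of _ \<theta>\<^sub>0], rule conjI[OF \<open>1 \<le> \<theta>\<^sub>0\<close>],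
      intro allI impI ballI, goal_cases)
    case (1 n y \<eta>)
    then show ?case
      using phase_derivative_estimates[OF \<open>linear E\<close> \<open>homogeneous_wrt Q E\<close> Qt_C2 \<open>0 < \<mu>\<close> mu_lt _ _ \<open>0 < \<delta>\<close> _
          near_0 near_infinity, of \<eta> "real n" \<theta>\<^sub>0 y] \<open>1 \<le> \<theta>\<^sub>0\<close>
      unfolding Let_def phase_def by auto
  qed
qed

end
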